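(* Let $s\in\mathbb R$ and $0<\epsilon_0<1$ be fixed. For $N>0$ let $\phi_N$ be defined by $\hat\phi_N=N^{-3/2-s}(\chi_{D_{1,N}}+\chi_{D_{2,N}})$, and let $t_N=N^{-3-\epsilon_0}$. Then $\|\phi_N\|_{H^{s,0}}\sim1$ uniformly in $N\ge1$, and there exist $C>0$ and $N_0$ such that for all $N\ge N_0$, $$\|u_{2,N}(t_N)\|_{H^{s,0}}^2\ge C\,N^{-1-2\epsilon_0-2s},$$ where $u_{2,N}$ denotes the second iterate $u_2$ associated with $h=\phi_N$.
   Context: $D_{1,N}=[N/2,N]\times[-6N^2,6N^2]$ and $D_{2,N}=[N,2N]\times[\sqrt3N^2,(\sqrt3+1)N^2]$; $\chi_D$ is the indicator of $D$. $P(\xi,\eta)=\xi^3-\eta^2/\xi$. $W(t)$, $t\in\mathbb R$, is defined by $\mathcal F_{x,y}(W(t)h)(\xi,\eta)=\exp(itP(\xi,\eta)-\xi^2|t|)\hat h(\xi,\eta)$. For $h$ in $H^{s,0}$, the second iterate is $u_2(t)=-\int_0^tW(t-t')\,\partial_x\big[(W(t')h)^2\big]\,dt'$, $t\ge0$. $H^{s,0}(\mathbb R^2)$ has norm $\|u\|_{H^{s,0}}^2=\int_{\mathbb R^2}(1+\xi^2)^s|\hat u(\xi,\eta)|^2d\xi d\eta$, and $A\sim B$ means $C^{-1}B\le A\le CB$ for a constant $C$. *)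

theory Defs
  imports "HOL-Analysis.Analysis"
begin

definition FT :: "(real \<times> real \<Rightarrow> complex) \<Rightarrow> real \<times> real \<Rightarrow> complex" where
  "FT f \<xi> = integral\<^sup>L lborel (\<lambda>x. exp (- \<i> * complex_of_real (x \<bullet> \<xi>)) * f x)"

definition iFT :: "(real \<times> real \<Rightarrow> complex) \<Rightarrow> real \<times> real \<Rightarrow> complex" where
  "iFT g x = complex_of_real (1 / (4 * pi\<^sup>2)) *
      integral\<^sup>L lborel (\<lambda>\<xi>. exp (\<i> * complex_of_real (x \<bullet> \<xi>)) * g \<xi>)"

text \<open>The symbol P(xi,eta) = xi^3 - eta^2/xi (at xi = 0, a null set, HOL's division gives 0).\<close>
definition Psym :: "real \<times> real \<Rightarrow> real" where
  "Psym \<xi> = fst \<xi> ^ 3 - snd \<xi> ^ 2 / fst \<xi>"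

definition Wmult :: "real \<Rightarrow> real \<times> real \<Rightarrow> complex" where
  "Wmult t \<xi> = exp (\<i> * complex_of_real (t * Psym \<xi>) - complex_of_real (fst \<xi> ^ 2 * \<bar>t\<bar>))"

text \<open>Functions h are represented by their Fourier transform hh = \<hat>h.
  W(t)h in physical space:\<close>
definition W :: "real \<Rightarrow> (real \<times> real \<Rightarrow> complex) \<Rightarrow> real \<times> real \<Rightarrow> complex" where
  "W t hh = iFT (\<lambda>\<xi>. Wmult t \<xi> * hh \<xi>)"

text \<open>Fourier transform of the second iterate
  u_2(t) = - int_0^t W(t-t') d_x[(W(t')h)^2] dt', computed frequency-wise
  (d_x corresponds to multiplication by i xi).\<close>
definition u2_hat :: "(real \<times> real \<Rightarrow> complex) \<Rightarrow> real \<Rightarrow> real \<times> real \<Rightarrow> complex" where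
  "u2_hat hh t \<xi> = - set_lebesgue_integral lborel {0..t}
      (\<lambda>t'. Wmult (t - t') \<xi> * (\<i> * complex_of_real (fst \<xi>)) *
            FT (\<lambda>x. (W t' hh x)\<^sup>2) \<xi>)"

text \<open>H^{s,0} norm of the function whose Fourier transform is g.\<close>
definition Hs0_norm :: "real \<Rightarrow> (real \<times> real \<Rightarrow> complex) \<Rightarrow> real" where
  "Hs0_norm s g = sqrt (enn2real
      (\<integral>\<^sup>+ \<xi>. ennreal ((1 + fst \<xi> ^ 2) powr s * (cmod (g \<xi>))\<^sup>2) \<partial>lborel))"

definition D1 :: "real \<Rightarrow> (real \<times> real) set" where
  "D1 N = {N/2..N} \<times> {-6 * N\<^sup>2..6 * N\<^sup>2}"

definition D2 :: "real \<Rightarrow> (real \<times> real) set" where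
  "D2 N = {N..2*N} \<times> {sqrt 3 * N\<^sup>2..(sqrt 3 + 1) * N\<^sup>2}"

definition phi_hat :: "real \<Rightarrow> real \<Rightarrow> real \<times> real \<Rightarrow> complex" where
  "phi_hat s N \<xi> = complex_of_real (N powr (-3/2 - s) * (indicator (D1 N) \<xi> + indicator (D2 N) \<xi>))"

end

theory Submission
  imports Defs "HOL-Probability.Characteristic_Functions"
begin

text \<open>
  All estimates are made on the Fourier side. On D1 N \<union> D2 N the weight (1 + xi^2)^s is
  comparable to N^(2s) and the square of the profile of phi_N is comparable to N^(-3-2s), while
  the area is comparable to N^3; this gives the size of the initial data.

  The Fourier transform of (W(t') phi)^2 is (4 pi^2)^(-1) times the self-convolution of the
  Fourier transform of W(t') phi. This is proved for bounded integrable g that is continuous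
  almost everywhere by inserting a Gaussian factor: it makes the triple integral absolutely
  convergent, so Fubini applies, and the Fourier transform of the Gaussian is an approximate
  identity. Hence u2_hat(t, xi) is -i xi / (4 pi^2) times a Duhamel time integral of the
  propagator against this convolution. For t <= t_N the phases t P and the dampings t xi^2 are
  small on the frequency supports, so the integrand has real part at least half of its size.
  For xi in a box of area N^3/4 inside D1 + D2 the set D1 \<inter> (xi - D2) contains a rectangle of
  area N^3/4, so |u2_hat(t_N, xi)| is at least a constant times N t_N N^(-2s) there; integrating
  its square against the weight N^(2s) over the box gives N^(-1 - 2 eps0 - 2s).
\<close>

type_synonym R2 = "real \<times> real"

section \<open>Integration on the plane\<close>

lemma integrable_lborel_pair_mult:
  fixes f :: "'a::euclidean_space \<Rightarrow> 'c::{real_normed_field,second_countable_topology,banach}"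
    and g :: "'b::euclidean_space \<Rightarrow> 'c"
  assumes f: "integrable lborel f" and g: "integrable lborel g"
  shows "integrable (lborel \<Otimes>\<^sub>M lborel) (\<lambda>(x,y). f x * g y)"
proof (rule lborel_pair.Fubini_integrable)
  have [measurable]: "f \<in> borel_measurable borel" "g \<in> borel_measurable borel"
    using f g by auto
  show "(\<lambda>(x, y). f x * g y) \<in> borel_measurable (lborel \<Otimes>\<^sub>M lborel)" by measurable
  have "(\<lambda>x. \<integral>y. norm (case (x, y) of (x, y) \<Rightarrow> f x * g y) \<partial>lborel)
      = (\<lambda>x. norm (f x) * (\<integral>y. norm (g y) \<partial>lborel))"
    by (auto simp: norm_mult)
  then show "integrable lborel (\<lambda>x. \<integral>y. norm (case (x, y) of (x, y) \<Rightarrow> f x * g y) \<partial>lborel)"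
    using f by (simp add: integrable_norm)
  show "AE x in lborel. integrable lborel (\<lambda>y. case (x, y) of (x, y) \<Rightarrow> f x * g y)"
    using g by auto
qed

lemma integral_lborel_prod_mult:
  fixes f :: "'a::euclidean_space \<Rightarrow> 'c::{real_normed_field,second_countable_topology,banach}"
    and g :: "'b::euclidean_space \<Rightarrow> 'c"
  assumes f: "integrable lborel f" and g: "integrable lborel g"
  shows "(\<integral>z. f (fst z) * g (snd z) \<partial>lborel) = integral\<^sup>L lborel f * integral\<^sup>L lborel g"
proof -
  have "(\<integral>z. f (fst z) * g (snd z) \<partial>lborel) = (\<integral>z. (\<lambda>(x,y). f x * g y) z \<partial>(lborel \<Otimes>\<^sub>M lborel))"
    by (simp add: lborel_prod case_prod_beta')
  also have "\<dots> = (\<integral>x. \<integral>y. f x * g y \<partial>lborel \<partial>lborel)"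
    using lborel_pair.integral_fst[OF integrable_lborel_pair_mult[OF f g]] by simp
  finally show ?thesis by simp
qed

lemma lborel_integral_swap_dominated:
  fixes F :: "'a::euclidean_space \<Rightarrow> 'b::euclidean_space \<Rightarrow> 'c::{banach, second_countable_topology}"
  assumes "(\<lambda>(x, y). F x y) \<in> borel_measurable (lborel \<Otimes>\<^sub>M lborel)"
    and f: "integrable lborel f" and g: "integrable lborel g"
    and bound: "\<And>x y. norm (F x y) \<le> f x * g y"
  shows "(\<integral>x. \<integral>y. F x y \<partial>lborel \<partial>lborel) = (\<integral>y. \<integral>x. F x y \<partial>lborel \<partial>lborel)"
proof -
  have "integrable (lborel \<Otimes>\<^sub>M lborel) (\<lambda>(x, y). F x y)"
  proof (rule Bochner_Integration.integrable_bound[OF integrable_lborel_pair_mult[OF f g] assms(1)])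
    show "AE xy in lborel \<Otimes>\<^sub>M lborel. norm (case xy of (x, y) \<Rightarrow> F x y) \<le> norm (case xy of (x, y) \<Rightarrow> f x * g y)"
      using bound by (intro AE_I2) (auto split: prod.splits intro: order_trans[OF _ abs_ge_self])
  qed
  then show ?thesis by (rule lborel_pair.Fubini_integral[symmetric])
qed

lemma norm_integral_le_integral:
  fixes f :: "'a \<Rightarrow> 'b::{banach,second_countable_topology}"
  assumes "integrable M g" "\<And>x. norm (f x) \<le> g x"
  shows "norm (integral\<^sup>L M f) \<le> integral\<^sup>L M g"
proof -
  have "norm (integral\<^sup>L M f) \<le> (\<integral>x. norm (f x) \<partial>M)" by (rule integral_norm_bound)
  also have "\<dots> \<le> integral\<^sup>L M g"
    using assms by (intro integral_mono') (auto intro: order_trans[OF norm_ge_zero])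
  finally show ?thesis .
qed

lemma nn_integral_lborel_affine:
  fixes f :: "'a::euclidean_space \<Rightarrow> ennreal" and c :: real
  assumes [measurable]: "f \<in> borel_measurable borel" and c: "c \<noteq> 0"
  shows "(\<integral>\<^sup>+x. f x \<partial>lborel) = ennreal (\<bar>c\<bar> ^ DIM('a)) * (\<integral>\<^sup>+x. f (t + c *\<^sub>R x) \<partial>lborel)"
  by (subst lborel_affine[OF c, of t]) (simp add: nn_integral_density nn_integral_distr nn_integral_cmult)

lemma lborel_integrable_affine:
  fixes f :: "'a::euclidean_space \<Rightarrow> 'b::{banach, second_countable_topology}"
  assumes f: "integrable lborel f" and c: "c \<noteq> 0"
  shows "integrable lborel (\<lambda>x. f (t + c *\<^sub>R x))"
proof -
  have [measurable]: "f \<in> borel_measurable borel" using f by auto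
  show ?thesis
    using f unfolding integrable_iff_bounded
    by (subst (asm) nn_integral_lborel_affine[where c=c and t=t]) (auto simp: ennreal_mult_less_top c)
qed

lemma lborel_integrable_affine_iff:
  fixes f :: "'a::euclidean_space \<Rightarrow> 'b::{banach, second_countable_topology}"
  assumes c: "c \<noteq> 0"
  shows "integrable lborel (\<lambda>x. f (t + c *\<^sub>R x)) \<longleftrightarrow> integrable lborel f"
proof
  assume "integrable lborel (\<lambda>x. f (t + c *\<^sub>R x))"
  from lborel_integrable_affine[OF this, of "1/c" "- t /\<^sub>R c"] c show "integrable lborel f"
    by (simp add: algebra_simps)
qed (rule lborel_integrable_affine[OF _ c])

lemma lborel_integral_affine:
  fixes f :: "'a::euclidean_space \<Rightarrow> 'b::{banach, second_countable_topology}" and c :: real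
  assumes c: "c \<noteq> 0"
  shows "(\<integral>x. f x \<partial>lborel) = (\<bar>c\<bar> ^ DIM('a)) *\<^sub>R (\<integral>x. f (t + c *\<^sub>R x) \<partial>lborel)"
proof cases
  assume f: "integrable lborel f"
  then have [measurable]: "f \<in> borel_measurable borel" by auto
  show ?thesis
    using c f lborel_integrable_affine[OF f c, of t]
    by (subst lborel_affine[OF c, of t]) (simp add: integral_density integral_distr)
next
  assume "\<not> integrable lborel f"
  with c show ?thesis by (simp add: lborel_integrable_affine_iff not_integrable_integral_eq)
qed

lemma emeasure_lborel_Icc_Times:
  fixes a b c d :: real
  assumes "a \<le> b" "c \<le> d"
  shows "emeasure lborel ({a..b} \<times> {c..d}) = ennreal ((b - a) * (d - c))"
proof -
  have "emeasure (lborel \<Otimes>\<^sub>M lborel) ({a..b} \<times> {c..d}) = ennreal (b - a) * ennreal (d - c)"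
    using assms by (simp add: lborel.emeasure_pair_measure_Times)
  then show ?thesis
    using assms by (simp add: lborel_prod ennreal_mult)
qed

lemma integrable_indicator_Icc_Times:
  "integrable lborel (indicator ({a..b} \<times> {c..d}) :: R2 \<Rightarrow> real)"
proof (rule integrable_real_indicator)
  show "emeasure lborel ({a..b} \<times> {c..d}) < \<infinity>"
    by (intro emeasure_bounded_finite bounded_Times bounded_closed_interval)
qed (auto intro: borel_closed closed_Times)

lemma nn_integral_indicator_Icc_Times:
  fixes a b c d k :: real
  assumes "a \<le> b" "c \<le> d" "0 \<le> k"
  shows "(\<integral>\<^sup>+ \<xi>. ennreal k * indicator ({a..b} \<times> {c..d}) \<xi> \<partial>lborel) = ennreal (k * ((b - a) * (d - c)))"
proof -
  have "{a..b} \<times> {c..d} \<in> sets (lborel :: R2 measure)"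
    by (simp add: borel_closed closed_Times)
  then show ?thesis
    using assms by (simp add: nn_integral_cmult_indicator emeasure_lborel_Icc_Times ennreal_mult)
qed

lemma AE_lborel_fst_snd_notin:
  fixes A B :: "real set"
  assumes "finite A" "finite B"
  shows "AE z in lborel. fst z \<notin> A \<and> snd z \<notin> B"
proof -
  have null: "emeasure lborel A = 0" "emeasure lborel B = 0"
    using assms by (simp_all add: emeasure_lborel_countable countable_finite)
  have sets: "A \<in> sets borel" "B \<in> sets borel"
    using assms by (simp_all add: finite_imp_closed)
  have "A \<times> UNIV \<in> null_sets (lborel \<Otimes>\<^sub>M lborel)" "UNIV \<times> B \<in> null_sets (lborel \<Otimes>\<^sub>M lborel)"
    using sets by (auto simp: null_sets_def lborel.emeasure_pair_measure_Times null intro!: pair_measureI)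
  then have "A \<times> UNIV \<union> UNIV \<times> B \<in> null_sets (lborel :: R2 measure)"
    unfolding lborel_prod by (rule null_sets.Un)
  then show ?thesis
    by (rule AE_I') auto
qed

lemma isCont_indicator_box:
  assumes "fst v \<notin> {a, b}" "snd v \<notin> {c, d}"
  shows "isCont (indicator ({a..b} \<times> {c..d}) :: R2 \<Rightarrow> real) v"
  using assms
  by (auto simp: isCont_indicator frontier_def interior_Times closure_Times mem_Times_iff)

section \<open>Gaussians\<close>

lemma integral_exp_ii_std_gaussian:
  "(\<integral>x. exp (\<i> * complex_of_real (t * x)) * complex_of_real (exp (- (x\<^sup>2) / 2)) \<partial>lborel)
     = complex_of_real (sqrt (2 * pi) * exp (- (t\<^sup>2) / 2))"
proof -
  have "(\<integral>x. std_normal_density x *\<^sub>R exp (\<i> * complex_of_real (t * x)) \<partial>lborel)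
      = char std_normal_distribution t"
    unfolding char_def by (subst integral_density) (auto simp: normal_density_nonneg)
  also have "\<dots> = complex_of_real (exp (- (t\<^sup>2) / 2))"
    by (simp add: char_std_normal_distribution)
  finally have "complex_of_real (sqrt (2 * pi)) *
      (\<integral>x. std_normal_density x *\<^sub>R exp (\<i> * complex_of_real (t * x)) \<partial>lborel)
      = complex_of_real (sqrt (2 * pi) * exp (- (t\<^sup>2) / 2))"
    by simp
  also have "complex_of_real (sqrt (2 * pi)) *
      (\<integral>x. std_normal_density x *\<^sub>R exp (\<i> * complex_of_real (t * x)) \<partial>lborel)
     = (\<integral>x. exp (\<i> * complex_of_real (t * x)) * complex_of_real (exp (- (x\<^sup>2) / 2)) \<partial>lborel)"
    unfolding integral_mult_right_zero[symmetric]
    by (rule Bochner_Integration.integral_cong) (auto simp: std_normal_density_def scaleR_conv_of_real)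
  finally show ?thesis by simp
qed

lemma integrable_std_gaussian: "integrable lborel (\<lambda>x::real. exp (- (x\<^sup>2) / 2))"
proof -
  have "integrable lborel (\<lambda>x. sqrt (2 * pi) * std_normal_density x)"
    using integrable_std_normal_moment[of 0] by simp
  then show ?thesis by (simp add: std_normal_density_def)
qed

lemma integral_exp_ii_gaussian:
  assumes r: "r > 0"
  shows "(\<integral>x. exp (\<i> * complex_of_real (a * x)) * complex_of_real (exp (- ((r * x)\<^sup>2) / 2)) \<partial>lborel)
     = complex_of_real (sqrt (2 * pi) / r * exp (- ((a / r)\<^sup>2) / 2))"
proof -
  let ?F = "\<lambda>y. exp (\<i> * complex_of_real ((a / r) * y)) * complex_of_real (exp (- (y\<^sup>2) / 2))"
  have "(\<integral>y. ?F y \<partial>lborel) = \<bar>r\<bar> *\<^sub>R (\<integral>x. ?F (0 + r * x) \<partial>lborel)"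
    using r by (intro lborel_integral_real_affine) simp
  also have "(\<lambda>x. ?F (0 + r * x))
      = (\<lambda>x. exp (\<i> * complex_of_real (a * x)) * complex_of_real (exp (- ((r * x)\<^sup>2) / 2)))"
    using r by (auto simp: fun_eq_iff)
  finally show ?thesis
    using r integral_exp_ii_std_gaussian[of "a / r"] by (simp add: scaleR_conv_of_real field_simps)
qed

lemma integrable_gaussian:
  "r > 0 \<Longrightarrow> integrable lborel (\<lambda>x::real. exp (- ((r * x)\<^sup>2) / 2))"
  using lborel_integrable_real_affine[OF integrable_std_gaussian, of r 0] by simp

lemma integrable_exp_ii_gaussian:
  "r > 0 \<Longrightarrow>
    integrable lborel (\<lambda>x::real. exp (\<i> * complex_of_real (a * x)) * complex_of_real (exp (- ((r * x)\<^sup>2) / 2)))"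
  by (rule Bochner_Integration.integrable_bound[OF integrable_gaussian]) (auto simp: norm_mult)

definition gauss :: "real \<Rightarrow> R2 \<Rightarrow> real" where
  "gauss r x = exp (- ((r * fst x)\<^sup>2 + (r * snd x)\<^sup>2) / 2)"

definition gauss_hat :: "real \<Rightarrow> R2 \<Rightarrow> real" where
  "gauss_hat r a = 2 * pi / r\<^sup>2 * exp (- ((fst a / r)\<^sup>2 + (snd a / r)\<^sup>2) / 2)"

lemma gauss_eq_mult: "gauss r x = exp (- ((r * fst x)\<^sup>2) / 2) * exp (- ((r * snd x)\<^sup>2) / 2)"
  unfolding gauss_def exp_add[symmetric] by (rule arg_cong[where f=exp]) (simp add: field_simps)

lemma gauss_pos: "gauss r x > 0"
  by (simp add: gauss_def)

lemma gauss_le_1: "gauss r x \<le> 1"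
  by (simp add: gauss_def)

lemma gauss_antimono: "0 \<le> r \<Longrightarrow> r \<le> r' \<Longrightarrow> gauss r' x \<le> gauss r x"
proof -
  assume "0 \<le> r" "r \<le> r'"
  then have "r\<^sup>2 \<le> r'\<^sup>2" by (intro power_mono) auto
  then have "(r * fst x)\<^sup>2 \<le> (r' * fst x)\<^sup>2" "(r * snd x)\<^sup>2 \<le> (r' * snd x)\<^sup>2"
    by (auto simp: power_mult_distrib intro: mult_right_mono)
  then show ?thesis unfolding gauss_def by simp
qed

lemma gauss_inverse_Suc_tendsto_1: "(\<lambda>n. gauss (1 / real (Suc n)) x) \<longlonglongrightarrow> 1"
proof -
  have "(\<lambda>n. 1 / real (Suc n)) \<longlonglongrightarrow> 0"
    using LIMSEQ_inverse_real_of_nat by (simp add: inverse_eq_divide)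
  then have "(\<lambda>n. gauss (1 / real (Suc n)) x) \<longlonglongrightarrow> exp (- ((0 * fst x)\<^sup>2 + (0 * snd x)\<^sup>2) / 2)"
    unfolding gauss_def by (intro tendsto_intros) auto
  then show ?thesis by simp
qed

lemma gauss_hat_pos: "r > 0 \<Longrightarrow> gauss_hat r x > 0"
  by (simp add: gauss_hat_def)

lemma gauss_hat_scaleR: "r > 0 \<Longrightarrow> gauss_hat r (r *\<^sub>R w) = 2 * pi / r\<^sup>2 * gauss 1 w"
  by (simp add: gauss_hat_def gauss_def)

lemma gauss_hat_uminus: "gauss_hat r (- a) = gauss_hat r a"
  by (simp add: gauss_hat_def power2_eq_square)

lemma borel_measurable_gauss[measurable]: "gauss r \<in> borel_measurable borel"
  unfolding gauss_def by (intro borel_measurable_continuous_onI continuous_intros; simp)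

lemma borel_measurable_gauss_hat[measurable]: "gauss_hat r \<in> borel_measurable borel"
  unfolding gauss_hat_def by (cases "r = 0") (simp_all add: borel_measurable_continuous_onI continuous_intros)

lemma integrable_gauss: "r > 0 \<Longrightarrow> integrable lborel (gauss r)"
  using integrable_lborel_pair_mult[OF integrable_gaussian integrable_gaussian, of r r]
  by (simp add: gauss_eq_mult[abs_def] lborel_prod case_prod_beta')

lemma integral_exp_ii_gauss:
  assumes r: "r > 0"
  shows "(\<integral>x. exp (\<i> * complex_of_real (x \<bullet> a)) * complex_of_real (gauss r x) \<partial>lborel)
     = complex_of_real (gauss_hat r a)"
proof -
  let ?F = "\<lambda>c x. exp (\<i> * complex_of_real (c * x)) * complex_of_real (exp (- ((r * x)\<^sup>2) / 2))"
  have "(\<lambda>x. exp (\<i> * complex_of_real (x \<bullet> a)) * complex_of_real (gauss r x))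
      = (\<lambda>x. ?F (fst a) (fst x) * ?F (snd a) (snd x))"
    unfolding gauss_eq_mult of_real_mult inner_prod_def
    by (auto simp: fun_eq_iff exp_add[symmetric] distrib_left mult.commute)
  then have "(\<integral>x. exp (\<i> * complex_of_real (x \<bullet> a)) * complex_of_real (gauss r x) \<partial>lborel)
      = integral\<^sup>L lborel (?F (fst a)) * integral\<^sup>L lborel (?F (snd a))"
    using integral_lborel_prod_mult[OF integrable_exp_ii_gaussian integrable_exp_ii_gaussian] r by simp
  also have "\<dots> = complex_of_real (sqrt (2 * pi) * sqrt (2 * pi) / r\<^sup>2 *
      (exp (- ((fst a / r)\<^sup>2) / 2) * exp (- ((snd a / r)\<^sup>2) / 2)))"
    unfolding integral_exp_ii_gaussian[OF r] of_real_mult[symmetric] of_real_eq_iff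
    by (simp add: power2_eq_square)
  also have "\<dots> = complex_of_real (gauss_hat r a)"
    unfolding gauss_hat_def exp_add[symmetric] by (simp add: add_divide_distrib)
  finally show ?thesis .
qed

lemma integral_gauss_1: "(\<integral>x. gauss 1 x \<partial>lborel) = 2 * pi"
proof -
  have "complex_of_real (\<integral>x. gauss 1 x \<partial>lborel)
      = (\<integral>x. exp (\<i> * complex_of_real (x \<bullet> 0)) * complex_of_real (gauss 1 x) \<partial>lborel)"
    by simp
  also have "\<dots> = complex_of_real (2 * pi)"
    by (subst integral_exp_ii_gauss) (simp_all add: gauss_hat_def)
  finally show ?thesis by (simp only: of_real_eq_iff)
qed

lemma integrable_gauss_hat_shift:
  assumes r: "r > 0"
  shows "integrable lborel (\<lambda>z. gauss_hat r (z - v))"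
proof -
  have "integrable lborel (\<lambda>w. gauss_hat r ((v + r *\<^sub>R w) - v))"
    using integrable_gauss[of 1] r by (simp add: gauss_hat_scaleR)
  then show ?thesis using lborel_integrable_affine_iff[of r "\<lambda>z. gauss_hat r (z - v)" v] r by simp
qed

lemma integral_gauss_hat_shift:
  assumes r: "r > 0"
  shows "(\<integral>z. gauss_hat r (z - v) \<partial>lborel) = 4 * pi\<^sup>2"
proof -
  have "(\<integral>z. gauss_hat r (z - v) \<partial>lborel) = r\<^sup>2 * (\<integral>w. gauss_hat r ((v + r *\<^sub>R w) - v) \<partial>lborel)"
    using lborel_integral_affine[where c=r and t=v and f="\<lambda>z. gauss_hat r (z - v)"] r
    by (simp add: power2_eq_square)
  also have "\<dots> = 4 * pi\<^sup>2"
    using r by (simp add: gauss_hat_scaleR integral_gauss_1 power2_eq_square)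
  finally show ?thesis .
qed

lemma gauss_hat_approx_identity:
  fixes g :: "R2 \<Rightarrow> complex"
  assumes [measurable]: "g \<in> borel_measurable borel" and bound: "\<And>v. norm (g v) \<le> M"
    and cont: "isCont g v"
  shows "(\<lambda>n. \<integral>z. g z * complex_of_real (gauss_hat (1 / Suc n) (z - v)) \<partial>lborel)
    \<longlonglongrightarrow> complex_of_real (4 * pi\<^sup>2) * g v"
proof -
  define r where "r n = 1 / real (Suc n)" for n
  have r: "r n > 0" for n by (simp add: r_def)
  have eq: "(\<integral>z. g z * complex_of_real (gauss_hat (r n) (z - v)) \<partial>lborel)
      = (\<integral>w. g (v + r n *\<^sub>R w) * complex_of_real (2 * pi * gauss 1 w) \<partial>lborel)" for n
    using r[of n] lborel_integral_affine[of "r n" "\<lambda>z. g z * complex_of_real (gauss_hat (r n) (z - v))" v]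
    by (simp add: gauss_hat_scaleR scaleR_conv_of_real power2_eq_square field_simps)
  have "(\<lambda>n. \<integral>w. g (v + r n *\<^sub>R w) * complex_of_real (2 * pi * gauss 1 w) \<partial>lborel)
      \<longlonglongrightarrow> (\<integral>w. g v * complex_of_real (2 * pi * gauss 1 w) \<partial>lborel)"
  proof (rule integral_dominated_convergence[where w="\<lambda>w. M * (2 * pi * gauss 1 w)"])
    show "integrable lborel (\<lambda>w. M * (2 * pi * gauss 1 w))"
      using integrable_gauss[of 1] by simp
    have "(\<lambda>n. r n) \<longlonglongrightarrow> 0"
      unfolding r_def using LIMSEQ_inverse_real_of_nat by (simp add: inverse_eq_divide)
    then have "(\<lambda>n. v + r n *\<^sub>R w) \<longlonglongrightarrow> v" for w
      using tendsto_add[OF tendsto_const tendsto_scaleR[OF _ tendsto_const]] by fastforce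
    then show "AE w in lborel. (\<lambda>n. g (v + r n *\<^sub>R w) * complex_of_real (2 * pi * gauss 1 w))
        \<longlonglongrightarrow> g v * complex_of_real (2 * pi * gauss 1 w)"
      using cont isCont_tendsto_compose by (fastforce intro!: tendsto_mult)
    show "AE w in lborel. norm (g (v + r n *\<^sub>R w) * complex_of_real (2 * pi * gauss 1 w))
        \<le> M * (2 * pi * gauss 1 w)" for n
      by (auto simp: norm_mult abs_mult less_imp_le[OF gauss_pos] bound intro!: mult_right_mono)
  qed simp_all
  also have "(\<integral>w. g v * complex_of_real (2 * pi * gauss 1 w) \<partial>lborel) = complex_of_real (4 * pi\<^sup>2) * g v"
    by (simp add: integral_gauss_1 power2_eq_square)
  finally show ?thesis using eq unfolding r_def by simp
qed

section \<open>The Fourier transform of a square\<close>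

text \<open>In the notation of the definitions, \<open>iFT g = fourier_int 1 g / (4 pi^2)\<close> and
  \<open>FT f \<xi> = fourier_int (-1) f \<xi>\<close>.\<close>

definition fourier_int :: "real \<Rightarrow> (R2 \<Rightarrow> complex) \<Rightarrow> R2 \<Rightarrow> complex" where
  "fourier_int \<sigma> g x = (\<integral>z. exp (\<i> * complex_of_real (\<sigma> * (x \<bullet> z))) * g z \<partial>lborel)"

lemma borel_measurable_fourier_int[measurable]:
  assumes [measurable]: "g \<in> borel_measurable borel"
  shows "fourier_int \<sigma> g \<in> borel_measurable borel"
proof -
  have [measurable]: "g \<in> borel_measurable lborel" by simp
  have "(\<lambda>x. \<integral>z. exp (\<i> * complex_of_real (\<sigma> * (x \<bullet> z))) * g z \<partial>lborel) \<in> borel_measurable lborel"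
    by (rule lborel.borel_measurable_lebesgue_integral) measurable
  then show ?thesis unfolding fourier_int_def[abs_def] by simp
qed

lemma norm_fourier_int_le:
  "integrable lborel g \<Longrightarrow> norm (fourier_int \<sigma> g x) \<le> (\<integral>z. norm (g z) \<partial>lborel)"
  unfolding fourier_int_def by (rule norm_integral_le_integral) (auto simp: norm_mult)

lemma cnj_fourier_int: "cnj (fourier_int \<sigma> g x) = fourier_int (- \<sigma>) (\<lambda>z. cnj (g z)) x"
proof -
  have "fourier_int (- \<sigma>) (\<lambda>z. cnj (g z)) x
      = (\<integral>z. cnj (exp (\<i> * complex_of_real (\<sigma> * (x \<bullet> z))) * g z) \<partial>lborel)"
    unfolding fourier_int_def by (rule Bochner_Integration.integral_cong) (auto simp: exp_cnj)
  then show ?thesis unfolding fourier_int_def by (simp only: Bochner_Integration.integral_cnj)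
qed

text \<open>The Gaussian factor makes the iterated integrals absolutely convergent; integrating out the
  physical variable first produces \<open>gauss_hat\<close>.\<close>

lemma integral_gauss_fourier_int:
  fixes g :: "R2 \<Rightarrow> complex"
  assumes r: "r > 0" and [measurable]: "g \<in> borel_measurable borel" and g: "integrable lborel g"
  shows "(\<integral>x. exp (\<i> * complex_of_real (x \<bullet> c)) * complex_of_real (gauss r x) * fourier_int \<sigma> g x \<partial>lborel)
       = (\<integral>w. g w * complex_of_real (gauss_hat r (c + \<sigma> *\<^sub>R w)) \<partial>lborel)"
proof -
  have [measurable]: "g \<in> borel_measurable lborel"
    by simp
  define F where "F x w = exp (\<i> * complex_of_real (x \<bullet> c)) * complex_of_real (gauss r x) *
    (exp (\<i> * complex_of_real (\<sigma> * (x \<bullet> w))) * g w)" for x w :: R2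
  have F_measurable: "(\<lambda>(x, w). F x w) \<in> borel_measurable (lborel \<Otimes>\<^sub>M lborel)"
    unfolding F_def by measurable
  have "(\<integral>x. exp (\<i> * complex_of_real (x \<bullet> c)) * complex_of_real (gauss r x) * fourier_int \<sigma> g x \<partial>lborel)
      = (\<integral>x. \<integral>w. F x w \<partial>lborel \<partial>lborel)"
    unfolding fourier_int_def F_def by simp
  also have "\<dots> = (\<integral>w. \<integral>x. F x w \<partial>lborel \<partial>lborel)"
    by (rule lborel_integral_swap_dominated[OF F_measurable, where f="gauss r" and g="\<lambda>w. norm (g w)"])
       (use integrable_gauss[OF r] g in \<open>simp_all add: F_def norm_mult gauss_def\<close>)
  also have "\<dots> = (\<integral>w. g w * complex_of_real (gauss_hat r (c + \<sigma> *\<^sub>R w)) \<partial>lborel)"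
  proof -
    have "F x w = g w * (exp (\<i> * complex_of_real (x \<bullet> (c + \<sigma> *\<^sub>R w))) * complex_of_real (gauss r x))" for x w
      unfolding F_def by (simp add: inner_add_right exp_add[symmetric] distrib_left algebra_simps)
    then show ?thesis
      by (simp only: integral_mult_right_zero integral_exp_ii_gauss[OF r])
  qed
  finally show ?thesis .
qed

lemma integral_gauss_fourier_product:
  fixes g1 g2 :: "R2 \<Rightarrow> complex"
  assumes r: "r > 0"
    and [measurable]: "g1 \<in> borel_measurable borel" and g2_measurable: "g2 \<in> borel_measurable borel"
    and g1: "integrable lborel g1" and g2: "integrable lborel g2"
  shows "(\<integral>x. exp (\<i> * complex_of_real (x \<bullet> b)) * complex_of_real (gauss r x) *
            (fourier_int \<sigma>1 g1 x * fourier_int \<sigma>2 g2 x) \<partial>lborel)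
       = (\<integral>z. \<integral>w. g1 z * g2 w * complex_of_real (gauss_hat r (b + \<sigma>1 *\<^sub>R z + \<sigma>2 *\<^sub>R w)) \<partial>lborel \<partial>lborel)"
proof -
  have [measurable]: "g1 \<in> borel_measurable lborel" "fourier_int \<sigma>2 g2 \<in> borel_measurable lborel"
    using g2_measurable by simp_all
  define F where "F x z = g1 z * (exp (\<i> * complex_of_real (x \<bullet> (b + \<sigma>1 *\<^sub>R z))) *
    complex_of_real (gauss r x) * fourier_int \<sigma>2 g2 x)" for x z :: R2
  have "(\<integral>x. exp (\<i> * complex_of_real (x \<bullet> b)) * complex_of_real (gauss r x) *
            (fourier_int \<sigma>1 g1 x * fourier_int \<sigma>2 g2 x) \<partial>lborel)
      = (\<integral>x. \<integral>z. F x z \<partial>lborel \<partial>lborel)"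
    unfolding fourier_int_def[of \<sigma>1] F_def
    by (simp add: integral_mult_left_zero[symmetric] integral_mult_right_zero[symmetric]
        inner_add_right exp_add algebra_simps del: integral_mult_left_zero integral_mult_right_zero)
  also have "\<dots> = (\<integral>z. \<integral>x. F x z \<partial>lborel \<partial>lborel)"
  proof (rule lborel_integral_swap_dominated[where f="gauss r" and g="\<lambda>z. (\<integral>w. norm (g2 w) \<partial>lborel) * norm (g1 z)"])
    show "norm (F x z) \<le> gauss r x * ((\<integral>w. norm (g2 w) \<partial>lborel) * norm (g1 z))" for x z
      unfolding F_def norm_mult using norm_fourier_int_le[OF g2, of \<sigma>2 x]
      by (simp add: gauss_def mult_left_mono mult_right_mono mult_ac)
  qed (use integrable_gauss[OF r] g1 in \<open>simp_all add: F_def\<close>)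
  also have "\<dots> = (\<integral>z. g1 z * (\<integral>w. g2 w * complex_of_real (gauss_hat r (b + \<sigma>1 *\<^sub>R z + \<sigma>2 *\<^sub>R w)) \<partial>lborel) \<partial>lborel)"
    unfolding F_def integral_mult_right_zero integral_gauss_fourier_int[OF r g2_measurable g2] ..
  also have "\<dots> = (\<integral>z. \<integral>w. g1 z * g2 w * complex_of_real (gauss_hat r (b + \<sigma>1 *\<^sub>R z + \<sigma>2 *\<^sub>R w)) \<partial>lborel \<partial>lborel)"
    by (simp only: mult.assoc integral_mult_right_zero)
  finally show ?thesis .
qed

locale bounded_integrable =
  fixes g :: "R2 \<Rightarrow> complex" and M :: real
  assumes borel_measurable_g[measurable]: "g \<in> borel_measurable borel"
    and integrable_g: "integrable lborel g"
    and norm_g_le: "\<And>v. norm (g v) \<le> M"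
begin

lemma borel_measurable_g_lborel[measurable]: "g \<in> borel_measurable lborel"
  by simp

lemma gauss_weighted_fourier_int_square_le:
  assumes r: "r > 0"
  shows "(\<integral>x. gauss r x * (norm (fourier_int 1 g x))\<^sup>2 \<partial>lborel) \<le> (\<integral>z. norm (g z) \<partial>lborel) * M * (4 * pi\<^sup>2)"
proof -
  have [measurable]: "(\<lambda>w. cnj (g w)) \<in> borel_measurable borel"
    using measurable_compose[OF borel_measurable_g borel_measurable_continuous_onI[OF continuous_on_cnj[OF continuous_on_id]]]
    by simp
  have pointwise: "complex_of_real (gauss r x * (norm (fourier_int 1 g x))\<^sup>2)
      = exp (\<i> * complex_of_real (x \<bullet> 0)) * complex_of_real (gauss r x) *
        (fourier_int 1 g x * fourier_int (- 1) (\<lambda>w. cnj (g w)) x)" for x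
    unfolding cnj_fourier_int[symmetric] of_real_mult complex_norm_square by simp
  have "complex_of_real (\<integral>x. gauss r x * (norm (fourier_int 1 g x))\<^sup>2 \<partial>lborel)
      = (\<integral>x. exp (\<i> * complex_of_real (x \<bullet> 0)) * complex_of_real (gauss r x) *
        (fourier_int 1 g x * fourier_int (- 1) (\<lambda>w. cnj (g w)) x) \<partial>lborel)"
    unfolding pointwise[symmetric] by (rule integral_complex_of_real[symmetric])
  also have "\<dots> = (\<integral>z. \<integral>w. g z * cnj (g w) * complex_of_real (gauss_hat r (0 + 1 *\<^sub>R z + (- 1) *\<^sub>R w)) \<partial>lborel \<partial>lborel)"
    by (rule integral_gauss_fourier_product[OF r]) (simp_all add: integrable_g)
  also have "norm \<dots> \<le> (\<integral>z. norm (g z) * (M * (4 * pi\<^sup>2)) \<partial>lborel)"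
  proof (rule norm_integral_le_integral)
    fix z
    have "norm (\<integral>w. g z * cnj (g w) * complex_of_real (gauss_hat r (0 + 1 *\<^sub>R z + (- 1) *\<^sub>R w)) \<partial>lborel)
        \<le> (\<integral>w. norm (g z) * M * gauss_hat r (w - z) \<partial>lborel)"
    proof (rule norm_integral_le_integral)
      show "integrable lborel (\<lambda>w. norm (g z) * M * gauss_hat r (w - z))"
        using integrable_gauss_hat_shift[OF r, of z] by simp
      show "norm (g z * cnj (g w) * complex_of_real (gauss_hat r (0 + 1 *\<^sub>R z + (- 1) *\<^sub>R w)))
          \<le> norm (g z) * M * gauss_hat r (w - z)" for w
        using gauss_hat_uminus[of r "w - z"] gauss_hat_pos[OF r, of "w - z"] norm_g_le[of w]
        by (simp add: norm_mult abs_of_pos mult_right_mono mult_left_mono)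
    qed
    also have "\<dots> = norm (g z) * (M * (4 * pi\<^sup>2))"
      using integral_gauss_hat_shift[OF r, of z] by simp
    finally show "norm (\<integral>w. g z * cnj (g w) * complex_of_real (gauss_hat r (0 + 1 *\<^sub>R z + (- 1) *\<^sub>R w)) \<partial>lborel)
        \<le> norm (g z) * (M * (4 * pi\<^sup>2))" .
  qed (simp add: integrable_g)
  finally show ?thesis
    by (simp add: mult.assoc)
qed

lemma nn_integral_fourier_int_square_le:
  "(\<integral>\<^sup>+x. ennreal ((norm (fourier_int 1 g x))\<^sup>2) \<partial>lborel)
    \<le> ennreal ((\<integral>z. norm (g z) \<partial>lborel) * M * (4 * pi\<^sup>2))"
proof -
  define f where "f n x = ennreal (gauss (1 / real (Suc n)) x * (norm (fourier_int 1 g x))\<^sup>2)" for n x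
  have "incseq f"
    unfolding f_def incseq_def le_fun_def
    by (auto intro!: ennreal_leI mult_right_mono gauss_antimono simp: frac_le)
  moreover have "f n \<in> borel_measurable lborel" for n
    unfolding f_def by measurable
  moreover have "(\<lambda>n. f n x) \<longlonglongrightarrow> ennreal ((norm (fourier_int 1 g x))\<^sup>2)" for x
    unfolding f_def using gauss_inverse_Suc_tendsto_1[of x]
    by (intro tendsto_ennrealI) (auto intro!: tendsto_eq_intros)
  ultimately have "(\<lambda>n. integral\<^sup>N lborel (f n)) \<longlonglongrightarrow> (\<integral>\<^sup>+x. ennreal ((norm (fourier_int 1 g x))\<^sup>2) \<partial>lborel)"
    by (rule nn_integral_LIMSEQ)
  moreover have "integral\<^sup>N lborel (f n) \<le> ennreal ((\<integral>z. norm (g z) \<partial>lborel) * M * (4 * pi\<^sup>2))" for n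
  proof -
    let ?r = "1 / real (Suc n)"
    have "integrable lborel (\<lambda>x. gauss ?r x * (norm (fourier_int 1 g x))\<^sup>2)"
    proof (rule Bochner_Integration.integrable_bound)
      show "integrable lborel (\<lambda>x. gauss ?r x * (\<integral>z. norm (g z) \<partial>lborel)\<^sup>2)"
        using integrable_gauss[of ?r] by simp
      show "AE x in lborel. norm (gauss ?r x * (norm (fourier_int 1 g x))\<^sup>2)
          \<le> norm (gauss ?r x * (\<integral>z. norm (g z) \<partial>lborel)\<^sup>2)"
        using norm_fourier_int_le[OF integrable_g]
        by (auto simp: abs_mult less_imp_le[OF gauss_pos] intro!: mult_left_mono power_mono)
    qed measurable
    then have "integral\<^sup>N lborel (f n) = ennreal (\<integral>x. gauss ?r x * (norm (fourier_int 1 g x))\<^sup>2 \<partial>lborel)"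
      unfolding f_def by (rule nn_integral_eq_integral) (auto simp: less_imp_le[OF gauss_pos])
    then show ?thesis
      using gauss_weighted_fourier_int_square_le[of ?r] by (simp add: ennreal_leI)
  qed
  ultimately show ?thesis using LIMSEQ_le_const2 by blast
qed

lemma integrable_fourier_int_square: "integrable lborel (\<lambda>x. (norm (fourier_int 1 g x))\<^sup>2)"
proof (rule integrableI_bounded)
  have "(\<integral>\<^sup>+x. ennreal ((norm (fourier_int 1 g x))\<^sup>2) \<partial>lborel) < \<infinity>"
    using nn_integral_fourier_int_square_le by (rule le_less_trans) simp
  then show "(\<integral>\<^sup>+x. ennreal (norm ((norm (fourier_int 1 g x))\<^sup>2)) \<partial>lborel) < \<infinity>"
    by simp
qed measurable

definition gauss_smooth :: "real \<Rightarrow> R2 \<Rightarrow> complex" where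
  "gauss_smooth r v = (\<integral>w. g w * complex_of_real (gauss_hat r (w - v)) \<partial>lborel)"

lemma borel_measurable_gauss_smooth[measurable]: "gauss_smooth r \<in> borel_measurable borel"
proof -
  have "(\<lambda>v. \<integral>w. g w * complex_of_real (gauss_hat r (w - v)) \<partial>lborel) \<in> borel_measurable lborel"
    by (rule lborel.borel_measurable_lebesgue_integral) measurable
  then show ?thesis unfolding gauss_smooth_def[abs_def] by simp
qed

lemma norm_gauss_smooth_le:
  assumes r: "r > 0"
  shows "norm (gauss_smooth r v) \<le> M * (4 * pi\<^sup>2)"
proof -
  have "norm (gauss_smooth r v) \<le> (\<integral>w. M * gauss_hat r (w - v) \<partial>lborel)"
    unfolding gauss_smooth_def
  proof (rule norm_integral_le_integral)
    show "integrable lborel (\<lambda>w. M * gauss_hat r (w - v))"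
      using integrable_gauss_hat_shift[OF r, of v] by simp
    show "norm (g w * complex_of_real (gauss_hat r (w - v))) \<le> M * gauss_hat r (w - v)" for w
      using gauss_hat_pos[OF r, of "w - v"] norm_g_le[of w]
      by (simp add: norm_mult abs_of_pos mult_right_mono)
  qed
  also have "\<dots> = M * (4 * pi\<^sup>2)"
    using integral_gauss_hat_shift[OF r, of v] by simp
  finally show ?thesis .
qed

lemma integral_gauss_fourier_int_square:
  assumes r: "r > 0"
  shows "(\<integral>x. exp (- \<i> * complex_of_real (x \<bullet> \<xi>)) * complex_of_real (gauss r x) *
            (fourier_int 1 g x * fourier_int 1 g x) \<partial>lborel)
       = (\<integral>z. g z * gauss_smooth r (\<xi> - z) \<partial>lborel)"
proof -
  have "(\<integral>x. exp (- \<i> * complex_of_real (x \<bullet> \<xi>)) * complex_of_real (gauss r x) *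
            (fourier_int 1 g x * fourier_int 1 g x) \<partial>lborel)
      = (\<integral>z. \<integral>w. g z * g w * complex_of_real (gauss_hat r (- \<xi> + 1 *\<^sub>R z + 1 *\<^sub>R w)) \<partial>lborel \<partial>lborel)"
    using integral_gauss_fourier_product[OF r borel_measurable_g borel_measurable_g integrable_g integrable_g,
        of "- \<xi>" 1 1]
    by simp
  also have "\<dots> = (\<integral>z. g z * gauss_smooth r (\<xi> - z) \<partial>lborel)"
    unfolding gauss_smooth_def integral_mult_right_zero[symmetric]
    by (intro Bochner_Integration.integral_cong refl) (simp add: algebra_simps)
  finally show ?thesis .
qed

lemma tendsto_integral_gauss_fourier_int_square:
  "(\<lambda>n. \<integral>x. exp (- \<i> * complex_of_real (x \<bullet> \<xi>)) * complex_of_real (gauss (1 / Suc n) x) *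
            (fourier_int 1 g x * fourier_int 1 g x) \<partial>lborel)
    \<longlonglongrightarrow> (\<integral>x. exp (- \<i> * complex_of_real (x \<bullet> \<xi>)) * (fourier_int 1 g x * fourier_int 1 g x) \<partial>lborel)"
proof (rule integral_dominated_convergence[where w="\<lambda>x. (norm (fourier_int 1 g x))\<^sup>2"])
  show "AE x in lborel. (\<lambda>n. exp (- \<i> * complex_of_real (x \<bullet> \<xi>)) * complex_of_real (gauss (1 / Suc n) x) *
            (fourier_int 1 g x * fourier_int 1 g x))
        \<longlonglongrightarrow> exp (- \<i> * complex_of_real (x \<bullet> \<xi>)) * (fourier_int 1 g x * fourier_int 1 g x)"
  proof (intro AE_I2)
    fix x
    have "(\<lambda>n. complex_of_real (gauss (1 / Suc n) x)) \<longlonglongrightarrow> complex_of_real 1"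
      by (intro tendsto_of_real gauss_inverse_Suc_tendsto_1)
    from tendsto_mult[OF tendsto_mult[OF tendsto_const this] tendsto_const]
    show "(\<lambda>n. exp (- \<i> * complex_of_real (x \<bullet> \<xi>)) * complex_of_real (gauss (1 / Suc n) x) *
            (fourier_int 1 g x * fourier_int 1 g x))
        \<longlonglongrightarrow> exp (- \<i> * complex_of_real (x \<bullet> \<xi>)) * (fourier_int 1 g x * fourier_int 1 g x)"
      by simp
  qed
  show "AE x in lborel. norm (exp (- \<i> * complex_of_real (x \<bullet> \<xi>)) * complex_of_real (gauss (1 / Suc n) x) *
            (fourier_int 1 g x * fourier_int 1 g x)) \<le> (norm (fourier_int 1 g x))\<^sup>2" for n
    by (auto simp: norm_mult power2_eq_square less_imp_le[OF gauss_pos] gauss_le_1 intro!: mult_left_le_one_le)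
qed (simp_all add: integrable_fourier_int_square)

lemma tendsto_integral_gauss_smooth:
  assumes cont: "AE z in lborel. isCont g (\<xi> - z)"
  shows "(\<lambda>n. \<integral>z. g z * gauss_smooth (1 / Suc n) (\<xi> - z) \<partial>lborel)
    \<longlonglongrightarrow> complex_of_real (4 * pi\<^sup>2) * (\<integral>z. g z * g (\<xi> - z) \<partial>lborel)"
proof -
  have "(\<lambda>n. \<integral>z. g z * gauss_smooth (1 / Suc n) (\<xi> - z) \<partial>lborel)
      \<longlonglongrightarrow> (\<integral>z. g z * (complex_of_real (4 * pi\<^sup>2) * g (\<xi> - z)) \<partial>lborel)"
  proof (rule integral_dominated_convergence[where w="\<lambda>z. norm (g z) * (M * (4 * pi\<^sup>2))"])
    show "AE z in lborel. (\<lambda>n. g z * gauss_smooth (1 / Suc n) (\<xi> - z))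
        \<longlonglongrightarrow> g z * (complex_of_real (4 * pi\<^sup>2) * g (\<xi> - z))"
      using cont unfolding gauss_smooth_def
      by eventually_elim (intro tendsto_mult tendsto_const gauss_hat_approx_identity[OF _ norm_g_le]; simp)
    show "AE z in lborel. norm (g z * gauss_smooth (1 / Suc n) (\<xi> - z)) \<le> norm (g z) * (M * (4 * pi\<^sup>2))" for n
      by (intro AE_I2) (simp add: norm_mult mult_left_mono norm_gauss_smooth_le)
  qed (simp_all add: integrable_g)
  moreover have "g z * (complex_of_real (4 * pi\<^sup>2) * g (\<xi> - z))
      = complex_of_real (4 * pi\<^sup>2) * (g z * g (\<xi> - z))" for z
    by (simp only: mult.left_commute)
  ultimately show ?thesis
    by (simp only: integral_mult_right_zero)
qed

theorem FT_iFT_square: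
  assumes "AE z in lborel. isCont g (\<xi> - z)"
  shows "FT (\<lambda>x. (iFT g x)\<^sup>2) \<xi> = complex_of_real (1 / (4 * pi\<^sup>2)) * (\<integral>z. g z * g (\<xi> - z) \<partial>lborel)"
proof -
  define c where "c = complex_of_real (1 / (4 * pi\<^sup>2))"
  have "FT (\<lambda>x. (iFT g x)\<^sup>2) \<xi>
      = c * c * (\<integral>x. exp (- \<i> * complex_of_real (x \<bullet> \<xi>)) * (fourier_int 1 g x * fourier_int 1 g x) \<partial>lborel)"
    unfolding FT_def iFT_def fourier_int_def c_def by (simp add: power2_eq_square mult_ac)
  also have "(\<integral>x. exp (- \<i> * complex_of_real (x \<bullet> \<xi>)) * (fourier_int 1 g x * fourier_int 1 g x) \<partial>lborel)
      = complex_of_real (4 * pi\<^sup>2) * (\<integral>z. g z * g (\<xi> - z) \<partial>lborel)"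
  proof (rule LIMSEQ_unique)
    have eq: "(\<integral>x. exp (- \<i> * complex_of_real (x \<bullet> \<xi>)) * complex_of_real (gauss (1 / Suc n) x) *
            (fourier_int 1 g x * fourier_int 1 g x) \<partial>lborel)
        = (\<integral>z. g z * gauss_smooth (1 / Suc n) (\<xi> - z) \<partial>lborel)" for n
      by (rule integral_gauss_fourier_int_square) simp
    show "(\<lambda>n. \<integral>z. g z * gauss_smooth (1 / Suc n) (\<xi> - z) \<partial>lborel)
        \<longlonglongrightarrow> (\<integral>x. exp (- \<i> * complex_of_real (x \<bullet> \<xi>)) * (fourier_int 1 g x * fourier_int 1 g x) \<partial>lborel)"
      using tendsto_integral_gauss_fourier_int_square[of \<xi>] unfolding eq .
  qed (rule tendsto_integral_gauss_smooth[OF assms])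
  finally show ?thesis
    unfolding c_def by (simp add: power2_eq_square)
qed

end

section \<open>The initial data and the second iterate\<close>

lemma borel_measurable_Wmult[measurable (raw)]:
  assumes [measurable]: "f \<in> borel_measurable M" "g \<in> borel_measurable M"
  shows "(\<lambda>x. Wmult (f x) (g x)) \<in> borel_measurable M"
proof -
  have [measurable]: "(\<lambda>x. fst (g x)) \<in> borel_measurable M" "(\<lambda>x. snd (g x)) \<in> borel_measurable M"
    by (rule measurable_compose[OF _ borel_measurable_continuous_onI], measurable, intro continuous_intros)+
  show ?thesis unfolding Wmult_def Psym_def by measurable
qed

lemma norm_Wmult_le_1: "norm (Wmult t v) \<le> 1"
  unfolding Wmult_def by (simp add: norm_exp)

lemma sets_D1[measurable]: "D1 N \<in> sets borel"
  unfolding D1_def by (intro borel_closed closed_Times closed_atLeastAtMost)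

lemma sets_D2[measurable]: "D2 N \<in> sets borel"
  unfolding D2_def by (intro borel_closed closed_Times closed_atLeastAtMost)

definition phi_profile :: "real \<Rightarrow> real \<Rightarrow> R2 \<Rightarrow> real" where
  "phi_profile s N z = N powr (-3/2 - s) * (indicator (D1 N) z + indicator (D2 N) z)"

lemma phi_hat_eq: "phi_hat s N z = complex_of_real (phi_profile s N z)"
  unfolding phi_hat_def phi_profile_def ..

lemma borel_measurable_phi_profile[measurable]: "phi_profile s N \<in> borel_measurable borel"
  unfolding phi_profile_def[abs_def] by measurable

lemma borel_measurable_phi_hat[measurable (raw)]:
  "f \<in> borel_measurable M \<Longrightarrow> (\<lambda>x. phi_hat s N (f x)) \<in> borel_measurable M"
  unfolding phi_hat_eq by measurable

lemma phi_profile_nonneg: "0 \<le> phi_profile s N z"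
  unfolding phi_profile_def by simp

lemma phi_profile_le: "phi_profile s N z \<le> 2 * N powr (-3/2 - s)"
  unfolding phi_profile_def by (auto simp: indicator_def)

lemma phi_profile_ge: "z \<in> D1 N \<union> D2 N \<Longrightarrow> N powr (-3/2 - s) \<le> phi_profile s N z"
  unfolding phi_profile_def by (auto simp: indicator_def)

lemma phi_profile_eq_0: "z \<notin> D1 N \<union> D2 N \<Longrightarrow> phi_profile s N z = 0"
  unfolding phi_profile_def by simp

lemma integrable_phi_profile: "integrable lborel (phi_profile s N)"
  unfolding phi_profile_def[abs_def] D1_def D2_def
  by (intro integrable_mult_right Bochner_Integration.integrable_add integrable_indicator_Icc_Times)

definition D_hull :: "real \<Rightarrow> R2 set" where
  "D_hull N = {N/2..2 * N} \<times> {-6 * N\<^sup>2..6 * N\<^sup>2}"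

lemma D1_D2_subset_D_hull:
  assumes "N \<ge> 0"
  shows "D1 N \<union> D2 N \<subseteq> D_hull N"
proof -
  have "sqrt 3 \<le> sqrt (4::real)"
    by (rule real_sqrt_le_mono) simp
  then have "sqrt 3 * N\<^sup>2 \<le> 2 * N\<^sup>2"
    by (simp add: mult_right_mono)
  moreover have "0 \<le> sqrt 3 * N\<^sup>2"
    by simp
  ultimately have "- 6 * N\<^sup>2 \<le> sqrt 3 * N\<^sup>2" "(sqrt 3 + 1) * N\<^sup>2 \<le> 6 * N\<^sup>2"
    unfolding distrib_right by linarith+
  then show ?thesis
    using assms by (auto simp: D1_def D2_def D_hull_def algebra_simps)
qed

definition Wphi_hat :: "real \<Rightarrow> real \<Rightarrow> real \<Rightarrow> R2 \<Rightarrow> complex" where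
  "Wphi_hat s N t z = Wmult t z * phi_hat s N z"

definition Wphi_conv :: "real \<Rightarrow> real \<Rightarrow> real \<Rightarrow> R2 \<Rightarrow> complex" where
  "Wphi_conv s N t \<xi> = (\<integral>z. Wphi_hat s N t z * Wphi_hat s N t (\<xi> - z) \<partial>lborel)"

definition duhamel :: "real \<Rightarrow> real \<Rightarrow> real \<Rightarrow> R2 \<Rightarrow> complex" where
  "duhamel s N t \<xi> = set_lebesgue_integral lborel {0..t} (\<lambda>t'. Wmult (t - t') \<xi> * Wphi_conv s N t' \<xi>)"

lemma borel_measurable_Wphi_hat[measurable]: "Wphi_hat s N t \<in> borel_measurable borel"
  unfolding Wphi_hat_def[abs_def] by measurable

lemma norm_Wphi_hat_le: "norm (Wphi_hat s N t z) \<le> phi_profile s N z"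
  unfolding Wphi_hat_def phi_hat_eq norm_mult
  using norm_Wmult_le_1[of t z] phi_profile_nonneg[of s N z] by (simp add: mult_left_le_one_le)

lemma integrable_Wphi_product: "integrable lborel (\<lambda>z. Wphi_hat s N t z * Wphi_hat s N t (\<xi> - z))"
proof (rule Bochner_Integration.integrable_bound)
  show "integrable lborel (\<lambda>z. phi_profile s N z * (2 * N powr (-3/2 - s)))"
    using integrable_phi_profile by simp
  show "AE z in lborel. norm (Wphi_hat s N t z * Wphi_hat s N t (\<xi> - z))
      \<le> norm (phi_profile s N z * (2 * N powr (-3/2 - s)))"
  proof (intro AE_I2)
    fix z
    have "norm (Wphi_hat s N t z) * norm (Wphi_hat s N t (\<xi> - z)) \<le> phi_profile s N z * (2 * N powr (-3/2 - s))"
      by (intro mult_mono norm_Wphi_hat_le order_trans[OF norm_Wphi_hat_le phi_profile_le])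
         (auto simp: phi_profile_nonneg)
    then show "norm (Wphi_hat s N t z * Wphi_hat s N t (\<xi> - z)) \<le> norm (phi_profile s N z * (2 * N powr (-3/2 - s)))"
      by (simp add: norm_mult phi_profile_nonneg)
  qed
qed measurable

lemma bounded_integrable_Wphi_hat: "bounded_integrable (Wphi_hat s N t) (2 * N powr (-3/2 - s))"
proof
  show "integrable lborel (Wphi_hat s N t)"
    by (rule Bochner_Integration.integrable_bound[OF integrable_phi_profile[of s N]])
       (auto simp: phi_profile_nonneg norm_Wphi_hat_le)
  show "norm (Wphi_hat s N t v) \<le> 2 * N powr (-3/2 - s)" for v
    using norm_Wphi_hat_le phi_profile_le order_trans by blast
qed measurable

lemma isCont_Wphi_hat:
  assumes "fst v \<notin> {0, N/2, N, 2 * N}"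
    and "snd v \<notin> {-6 * N\<^sup>2, 6 * N\<^sup>2, sqrt 3 * N\<^sup>2, (sqrt 3 + 1) * N\<^sup>2}"
  shows "isCont (Wphi_hat s N t) v"
proof -
  have "isCont (indicator (D1 N) :: R2 \<Rightarrow> real) v" "isCont (indicator (D2 N) :: R2 \<Rightarrow> real) v"
    unfolding D1_def D2_def using assms by (auto intro!: isCont_indicator_box)
  then have "isCont (phi_hat s N) v"
    unfolding phi_hat_def[abs_def] by (intro continuous_intros)
  moreover have "isCont (Wmult t) v"
    unfolding Wmult_def[abs_def] Psym_def using assms by (intro continuous_intros) auto
  ultimately show ?thesis
    unfolding Wphi_hat_def[abs_def] by (intro continuous_intros)
qed

lemma AE_isCont_Wphi_hat: "AE z in lborel. isCont (Wphi_hat s N t) (\<xi> - z)"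
proof -
  let ?A = "(\<lambda>c. fst \<xi> - c) ` {0, N/2, N, 2 * N}"
  let ?B = "(\<lambda>c. snd \<xi> - c) ` {-6 * N\<^sup>2, 6 * N\<^sup>2, sqrt 3 * N\<^sup>2, (sqrt 3 + 1) * N\<^sup>2}"
  have "AE z in lborel. fst z \<notin> ?A \<and> snd z \<notin> ?B"
    by (rule AE_lborel_fst_snd_notin) auto
  then show ?thesis
  proof eventually_elim
    case (elim z)
    then have "fst (\<xi> - z) \<notin> {0, N/2, N, 2 * N}"
      "snd (\<xi> - z) \<notin> {-6 * N\<^sup>2, 6 * N\<^sup>2, sqrt 3 * N\<^sup>2, (sqrt 3 + 1) * N\<^sup>2}"
      by (auto simp: image_iff algebra_simps)
    then show ?case by (rule isCont_Wphi_hat)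
  qed
qed

lemma FT_square_W:
  "FT (\<lambda>x. (W t (phi_hat s N) x)\<^sup>2) \<xi> = complex_of_real (1 / (4 * pi\<^sup>2)) * Wphi_conv s N t \<xi>"
proof -
  interpret bounded_integrable "Wphi_hat s N t" "2 * N powr (-3/2 - s)"
    by (rule bounded_integrable_Wphi_hat)
  have "W t (phi_hat s N) = iFT (Wphi_hat s N t)"
    unfolding W_def Wphi_hat_def[abs_def] ..
  then show ?thesis
    using FT_iFT_square[OF AE_isCont_Wphi_hat] unfolding Wphi_conv_def by simp
qed

lemma u2_hat_eq_duhamel:
  "u2_hat (phi_hat s N) t \<xi> = - (\<i> * complex_of_real (fst \<xi>) * complex_of_real (1 / (4 * pi\<^sup>2))) * duhamel s N t \<xi>"
proof -
  have "(\<lambda>t'. Wmult (t - t') \<xi> * (\<i> * complex_of_real (fst \<xi>)) * FT (\<lambda>x. (W t' (phi_hat s N) x)\<^sup>2) \<xi>)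
      = (\<lambda>t'. (\<i> * complex_of_real (fst \<xi>) * complex_of_real (1 / (4 * pi\<^sup>2))) * (Wmult (t - t') \<xi> * Wphi_conv s N t' \<xi>))"
    unfolding FT_square_W by (simp add: fun_eq_iff mult_ac)
  then show ?thesis unfolding u2_hat_def duhamel_def by simp
qed

lemma norm_u2_hat:
  "norm (u2_hat (phi_hat s N) t \<xi>) = \<bar>fst \<xi>\<bar> * (1 / (4 * pi\<^sup>2)) * norm (duhamel s N t \<xi>)"
  unfolding u2_hat_eq_duhamel norm_minus_cancel norm_mult norm_ii norm_of_real by simp

definition Hs0_energy :: "real \<Rightarrow> (R2 \<Rightarrow> complex) \<Rightarrow> ennreal" where
  "Hs0_energy s g = (\<integral>\<^sup>+ \<xi>. ennreal ((1 + fst \<xi> ^ 2) powr s * (cmod (g \<xi>))\<^sup>2) \<partial>lborel)"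

lemma Hs0_norm_squared: "(Hs0_norm s g)\<^sup>2 = enn2real (Hs0_energy s g)"
  unfolding Hs0_norm_def Hs0_energy_def by simp

lemma Hs0_norm_nonneg: "0 \<le> Hs0_norm s g"
  unfolding Hs0_norm_def by simp

lemma Hs0_norm_squared_ge:
  "Hs0_energy s g < \<infinity> \<Longrightarrow> ennreal a \<le> Hs0_energy s g \<Longrightarrow> a \<le> (Hs0_norm s g)\<^sup>2"
proof (cases "a \<le> 0")
  case False
  assume "Hs0_energy s g < \<infinity>" "ennreal a \<le> Hs0_energy s g"
  then have "enn2real (ennreal a) \<le> enn2real (Hs0_energy s g)"
    by (intro enn2real_mono) auto
  then show ?thesis
    using False by (simp add: Hs0_norm_squared)
qed (use zero_le_power2 order_trans in blast)

lemma Hs0_norm_squared_le: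
  "Hs0_energy s g \<le> ennreal b \<Longrightarrow> 0 \<le> b \<Longrightarrow> (Hs0_norm s g)\<^sup>2 \<le> b"
  unfolding Hs0_norm_squared by (rule enn2real_leI)

lemma Hs0_energy_finite:
  assumes "bounded S" and vanish: "\<And>\<xi>. \<xi> \<notin> S \<Longrightarrow> g \<xi> = 0" and bound: "\<And>\<xi>. norm (g \<xi>) \<le> B"
  shows "Hs0_energy s g < \<infinity>"
proof -
  obtain R where R: "\<And>\<xi>. \<xi> \<in> S \<Longrightarrow> norm \<xi> \<le> R"
    using \<open>bounded S\<close> by (auto simp: bounded_iff)
  have pointwise: "ennreal ((1 + fst \<xi> ^ 2) powr s * (cmod (g \<xi>))\<^sup>2)
      \<le> ennreal ((1 + R\<^sup>2) powr \<bar>s\<bar> * B\<^sup>2) * indicator (cball 0 R) \<xi>" for \<xi>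
  proof (cases "\<xi> \<in> S")
    case True
    have "\<bar>fst \<xi>\<bar> \<le> R"
      using norm_fst_le[of "fst \<xi>" "snd \<xi>"] R[OF True] by simp
    then have "fst \<xi> ^ 2 \<le> R\<^sup>2"
      by (metis abs_ge_zero power2_abs power_mono)
    then have "(1 + fst \<xi> ^ 2) powr s \<le> (1 + R\<^sup>2) powr \<bar>s\<bar>"
      by (intro order_trans[OF powr_mono powr_mono2]) auto
    moreover have "(cmod (g \<xi>))\<^sup>2 \<le> B\<^sup>2"
      using bound[of \<xi>] by (intro power_mono) auto
    ultimately show ?thesis
      using True R by (auto intro!: ennreal_leI mult_mono)
  qed (simp add: vanish)
  have "Hs0_energy s g \<le> (\<integral>\<^sup>+ \<xi>. ennreal ((1 + R\<^sup>2) powr \<bar>s\<bar> * B\<^sup>2) * indicator (cball (0::R2) R) \<xi> \<partial>lborel)"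
    unfolding Hs0_energy_def by (intro nn_integral_mono pointwise)
  also have "\<dots> < \<infinity>"
    using emeasure_bounded_finite[of "cball (0::R2) R"]
    by (simp add: nn_integral_cmult_indicator ennreal_mult_less_top)
  finally show ?thesis .
qed

lemma powr_bounds_of_between_inverse:
  fixes c q s :: real
  assumes c: "1 \<le> c" and q: "1 / c \<le> q" "q \<le> c"
  shows "c powr (- \<bar>s\<bar>) \<le> q powr s" "q powr s \<le> c powr \<bar>s\<bar>"
proof -
  have "0 < 1 / c"
    using c by simp
  then have "q > 0"
    using q(1) by linarith
  then have "ln q \<le> ln c" "- ln c \<le> ln q"
    using c q ln_le_cancel_iff[of "1 / c" q] by (auto simp: ln_div)
  then have "\<bar>s * ln q\<bar> \<le> \<bar>s\<bar> * ln c"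
    unfolding abs_mult by (intro mult_left_mono) auto
  then show "c powr (- \<bar>s\<bar>) \<le> q powr s" "q powr s \<le> c powr \<bar>s\<bar>"
    using c \<open>q > 0\<close> by (auto simp: powr_def abs_le_iff)
qed

lemma sobolev_weight_bounds:
  fixes N x s :: real
  assumes N: "N \<ge> 1" and x: "N/2 \<le> x" "x \<le> 2 * N"
  shows "5 powr (- \<bar>s\<bar>) * N powr (2 * s) \<le> (1 + x\<^sup>2) powr s"
    and "(1 + x\<^sup>2) powr s \<le> 5 powr \<bar>s\<bar> * N powr (2 * s)"
proof -
  define q where "q = (1 + x\<^sup>2) / N\<^sup>2"
  have N2: "1 \<le> N\<^sup>2"
    using N by (simp add: one_le_power)
  have "(N/2)\<^sup>2 \<le> x\<^sup>2" "x\<^sup>2 \<le> (2 * N)\<^sup>2"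
    using x N by (intro power_mono; simp)+
  then have "N\<^sup>2 \<le> 4 * x\<^sup>2" "x\<^sup>2 \<le> 4 * N\<^sup>2"
    by (simp_all add: power_divide power_mult_distrib)
  then have "N\<^sup>2 \<le> 5 * (1 + x\<^sup>2)" "1 + x\<^sup>2 \<le> 5 * N\<^sup>2"
    using N2 zero_le_power2[of x] by auto
  moreover have "0 < N\<^sup>2"
    using N2 by linarith
  ultimately have "1 / 5 \<le> q" "q \<le> 5"
    unfolding q_def by (simp_all add: pos_le_divide_eq pos_divide_le_eq)
  then have bounds: "5 powr (- \<bar>s\<bar>) \<le> q powr s" "q powr s \<le> 5 powr \<bar>s\<bar>"
    using powr_bounds_of_between_inverse[of 5 q s] by simp_all
  have eq: "(1 + x\<^sup>2) powr s = q powr s * N powr (2 * s)"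
    unfolding q_def using N by (simp add: powr_divide powr_powr[symmetric] powr_mult_base)
  show "5 powr (- \<bar>s\<bar>) * N powr (2 * s) \<le> (1 + x\<^sup>2) powr s"
    and "(1 + x\<^sup>2) powr s \<le> 5 powr \<bar>s\<bar> * N powr (2 * s)"
    unfolding eq using bounds by (simp_all add: mult_right_mono)
qed

section \<open>Size of the initial data\<close>

lemma powr_profile_square:
  fixes N s :: real
  shows "N > 0 \<Longrightarrow> N powr (-3/2 - s) * N powr (-3/2 - s) = N powr (-3 - 2 * s)"
  by (simp add: powr_add[symmetric])

lemma powr_weight_times_profile_square:
  fixes N s :: real
  shows "N > 0 \<Longrightarrow> N powr (2 * s) * N powr (-3 - 2 * s) = 1 / N ^ 3"
  by (simp add: powr_add[symmetric] powr_minus_divide)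

lemma weighted_phi_hat_square_ge:
  assumes N: "N \<ge> 1" and \<xi>: "\<xi> \<in> D1 N"
  shows "5 powr (- \<bar>s\<bar>) / N ^ 3 \<le> (1 + fst \<xi> ^ 2) powr s * (cmod (phi_hat s N \<xi>))\<^sup>2"
proof -
  have "N/2 \<le> fst \<xi>" "fst \<xi> \<le> 2 * N"
    using \<xi> D1_D2_subset_D_hull[of N] N by (auto simp: D_hull_def)
  then have weight: "5 powr (- \<bar>s\<bar>) * N powr (2 * s) \<le> (1 + fst \<xi> ^ 2) powr s"
    by (rule sobolev_weight_bounds(1)[OF N])
  have "N powr (-3/2 - s) * N powr (-3/2 - s) \<le> phi_profile s N \<xi> * phi_profile s N \<xi>"
    using \<xi> by (intro mult_mono phi_profile_ge) (auto simp: phi_profile_nonneg)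
  then have "N powr (-3 - 2 * s) \<le> (cmod (phi_hat s N \<xi>))\<^sup>2"
    using powr_profile_square[of N s] N by (simp add: phi_hat_eq phi_profile_nonneg power2_eq_square)
  with weight have "5 powr (- \<bar>s\<bar>) * (N powr (2 * s) * N powr (-3 - 2 * s))
      \<le> (1 + fst \<xi> ^ 2) powr s * (cmod (phi_hat s N \<xi>))\<^sup>2"
    unfolding mult.assoc[symmetric] by (intro mult_mono) auto
  then show ?thesis
    using powr_weight_times_profile_square[of N s] N by simp
qed

lemma weighted_phi_hat_square_le:
  assumes N: "N \<ge> 1" and \<xi>: "\<xi> \<in> D_hull N"
  shows "(1 + fst \<xi> ^ 2) powr s * (cmod (phi_hat s N \<xi>))\<^sup>2 \<le> 4 * 5 powr \<bar>s\<bar> / N ^ 3"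
proof -
  have "N/2 \<le> fst \<xi>" "fst \<xi> \<le> 2 * N"
    using \<xi> by (auto simp: D_hull_def)
  then have weight: "(1 + fst \<xi> ^ 2) powr s \<le> 5 powr \<bar>s\<bar> * N powr (2 * s)"
    by (rule sobolev_weight_bounds(2)[OF N])
  have "phi_profile s N \<xi> * phi_profile s N \<xi> \<le> (2 * N powr (-3/2 - s)) * (2 * N powr (-3/2 - s))"
    by (intro mult_mono phi_profile_le) (auto simp: phi_profile_nonneg)
  then have "(cmod (phi_hat s N \<xi>))\<^sup>2 \<le> 4 * N powr (-3 - 2 * s)"
    using powr_profile_square[of N s] N by (simp add: phi_hat_eq phi_profile_nonneg power2_eq_square)
  with weight have "(1 + fst \<xi> ^ 2) powr s * (cmod (phi_hat s N \<xi>))\<^sup>2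
      \<le> 5 powr \<bar>s\<bar> * N powr (2 * s) * (4 * N powr (-3 - 2 * s))"
    by (intro mult_mono) auto
  also have "\<dots> = 4 * 5 powr \<bar>s\<bar> * (N powr (2 * s) * N powr (-3 - 2 * s))"
    by (simp only: ac_simps)
  also have "\<dots> = 4 * 5 powr \<bar>s\<bar> / N ^ 3"
    using powr_weight_times_profile_square[of N s] N by simp
  finally show ?thesis .
qed

lemma Hs0_energy_phi_ge:
  assumes N: "N \<ge> 1"
  shows "ennreal (6 * 5 powr (- \<bar>s\<bar>)) \<le> Hs0_energy s (phi_hat s N)"
proof -
  have "c / N ^ 3 * ((N - N / 2) * (6 * N\<^sup>2 - - 6 * N\<^sup>2)) = 6 * c" for c
    using N by (simp add: field_simps power2_eq_square power3_eq_cube)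
  then have "ennreal (6 * 5 powr (- \<bar>s\<bar>))
      = ennreal (5 powr (- \<bar>s\<bar>) / N ^ 3 * ((N - N / 2) * (6 * N\<^sup>2 - - 6 * N\<^sup>2)))"
    by (simp only:)
  also have "\<dots> = (\<integral>\<^sup>+ \<xi>. ennreal (5 powr (- \<bar>s\<bar>) / N ^ 3) * indicator (D1 N) \<xi> \<partial>lborel)"
    unfolding D1_def using N by (intro nn_integral_indicator_Icc_Times[symmetric]) auto
  also have "\<dots> \<le> Hs0_energy s (phi_hat s N)"
    unfolding Hs0_energy_def using weighted_phi_hat_square_ge[OF N]
    by (intro nn_integral_mono) (auto simp: ennreal_leI indicator_def)
  finally show ?thesis .
qed

lemma Hs0_energy_phi_le:
  assumes N: "N \<ge> 1"
  shows "Hs0_energy s (phi_hat s N) \<le> ennreal (72 * 5 powr \<bar>s\<bar>)"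
proof -
  have "phi_hat s N \<xi> = 0" if "\<xi> \<notin> D_hull N" for \<xi>
    using that D1_D2_subset_D_hull[of N] N phi_profile_eq_0[of \<xi> N s] by (auto simp: phi_hat_eq)
  then have "Hs0_energy s (phi_hat s N)
      \<le> (\<integral>\<^sup>+ \<xi>. ennreal (4 * 5 powr \<bar>s\<bar> / N ^ 3) * indicator (D_hull N) \<xi> \<partial>lborel)"
    unfolding Hs0_energy_def using weighted_phi_hat_square_le[OF N]
    by (intro nn_integral_mono) (auto simp: ennreal_leI indicator_def)
  also have "\<dots> = ennreal (72 * 5 powr \<bar>s\<bar>)"
  proof -
    have "4 * c / N ^ 3 * ((2 * N - N / 2) * (6 * N\<^sup>2 - - 6 * N\<^sup>2)) = 72 * c" for c
      using N by (simp add: field_simps power2_eq_square power3_eq_cube)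
    then show ?thesis
      unfolding D_hull_def using N by (subst nn_integral_indicator_Icc_Times) auto
  qed
  finally show ?thesis .
qed

lemma Hs0_norm_phi_squared_bounds:
  assumes N: "N \<ge> 1"
  shows "6 * 5 powr (- \<bar>s\<bar>) \<le> (Hs0_norm s (phi_hat s N))\<^sup>2"
    and "(Hs0_norm s (phi_hat s N))\<^sup>2 \<le> 72 * 5 powr \<bar>s\<bar>"
proof -
  have "Hs0_energy s (phi_hat s N) < \<infinity>"
    using Hs0_energy_phi_le[OF N] by (rule le_less_trans) simp
  then show "6 * 5 powr (- \<bar>s\<bar>) \<le> (Hs0_norm s (phi_hat s N))\<^sup>2"
    using Hs0_energy_phi_ge[OF N] by (rule Hs0_norm_squared_ge)
  show "(Hs0_norm s (phi_hat s N))\<^sup>2 \<le> 72 * 5 powr \<bar>s\<bar>"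
    using Hs0_energy_phi_le[OF N] by (rule Hs0_norm_squared_le) simp
qed

lemma Hs0_norm_phi_uniform_bounds:
  "\<exists>C>0. \<forall>N\<ge>1. 1 / C \<le> Hs0_norm s (phi_hat s N) \<and> Hs0_norm s (phi_hat s N) \<le> C"
proof (intro exI[of _ "9 * 5 powr \<bar>s\<bar>"] conjI allI impI)
  define w where "w = 5 powr \<bar>s\<bar>"
  have w: "1 \<le> w" "w \<le> w * w"
    unfolding w_def using ge_one_powr_ge_zero[of 5 "\<bar>s\<bar>"] mult_left_mono[of 1 "5 powr \<bar>s\<bar>"] by auto
  show "0 < 9 * w"
    using w by simp
  fix N :: real
  assume N: "1 \<le> N"
  have "(1 / (9 * w))\<^sup>2 = 1 / (81 * (w * w))"
    by (simp add: power2_eq_square)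
  also have "\<dots> \<le> 6 / w"
    using w by (intro frac_le) auto
  also have "\<dots> \<le> (Hs0_norm s (phi_hat s N))\<^sup>2"
    using Hs0_norm_phi_squared_bounds(1)[OF N, of s] unfolding w_def by (simp add: powr_minus_divide)
  finally show "1 / (9 * w) \<le> Hs0_norm s (phi_hat s N)"
    by (rule power2_le_imp_le[OF _ Hs0_norm_nonneg])
  have "(Hs0_norm s (phi_hat s N))\<^sup>2 \<le> 81 * (w * w)"
    using Hs0_norm_phi_squared_bounds(2)[OF N, of s] w unfolding w_def by linarith
  also have "\<dots> = (9 * w)\<^sup>2"
    by (simp add: power2_eq_square)
  finally show "Hs0_norm s (phi_hat s N) \<le> 9 * w"
    by (rule power2_le_imp_le) (use w in simp)
qed

section \<open>Finiteness of the energy of the second iterate\<close>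

definition phi_mass :: "real \<Rightarrow> real \<Rightarrow> real" where
  "phi_mass s N = (\<integral>z. phi_profile s N z \<partial>lborel)"

lemma phi_mass_nonneg: "0 \<le> phi_mass s N"
  unfolding phi_mass_def by (simp add: phi_profile_nonneg)

lemma norm_Wphi_conv_le: "norm (Wphi_conv s N t \<xi>) \<le> 2 * N powr (-3/2 - s) * phi_mass s N"
proof -
  have "norm (Wphi_conv s N t \<xi>) \<le> (\<integral>z. phi_profile s N z * (2 * N powr (-3/2 - s)) \<partial>lborel)"
    unfolding Wphi_conv_def
  proof (rule norm_integral_le_integral)
    show "integrable lborel (\<lambda>z. phi_profile s N z * (2 * N powr (-3/2 - s)))"
      using integrable_phi_profile by simp
    show "norm (Wphi_hat s N t z * Wphi_hat s N t (\<xi> - z)) \<le> phi_profile s N z * (2 * N powr (-3/2 - s))" for z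
      unfolding norm_mult
      by (intro mult_mono norm_Wphi_hat_le order_trans[OF norm_Wphi_hat_le phi_profile_le])
         (auto simp: phi_profile_nonneg)
  qed
  then show ?thesis
    unfolding phi_mass_def by (simp add: mult.commute)
qed

definition D_sum :: "real \<Rightarrow> R2 set" where
  "D_sum N = {N..4 * N} \<times> {-12 * N\<^sup>2..12 * N\<^sup>2}"

lemma Wphi_conv_eq_0:
  assumes N: "N \<ge> 0" and \<xi>: "\<xi> \<notin> D_sum N"
  shows "Wphi_conv s N t \<xi> = 0"
proof -
  have "Wphi_hat s N t z * Wphi_hat s N t (\<xi> - z) = 0" for z
  proof (rule ccontr)
    assume "Wphi_hat s N t z * Wphi_hat s N t (\<xi> - z) \<noteq> 0"
    then have "phi_profile s N z \<noteq> 0" "phi_profile s N (\<xi> - z) \<noteq> 0"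
      unfolding Wphi_hat_def phi_hat_eq by auto
    then have "z \<in> D_hull N" "\<xi> - z \<in> D_hull N"
      using D1_D2_subset_D_hull[OF N] phi_profile_eq_0 by blast+
    then have "\<xi> \<in> D_sum N"
      unfolding D_hull_def D_sum_def by (cases \<xi>, cases z) auto
    with \<xi> show False by simp
  qed
  then show ?thesis
    unfolding Wphi_conv_def by (simp only: Bochner_Integration.integral_zero)
qed

lemma borel_measurable_Wphi_conv_time[measurable]: "(\<lambda>t. Wphi_conv s N t \<xi>) \<in> borel_measurable lborel"
proof -
  have "(\<lambda>t. \<integral>z. Wmult t z * phi_hat s N z * (Wmult t (\<xi> - z) * phi_hat s N (\<xi> - z)) \<partial>lborel)
      \<in> borel_measurable lborel"
    by (rule lborel.borel_measurable_lebesgue_integral) measurable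
  then show ?thesis
    unfolding Wphi_conv_def Wphi_hat_def .
qed

lemma norm_duhamel_integrand_le:
  "norm (Wmult (t - t') \<xi> * Wphi_conv s N t' \<xi>) \<le> 2 * N powr (-3/2 - s) * phi_mass s N"
  unfolding norm_mult
  using mult_mono[OF norm_Wmult_le_1 norm_Wphi_conv_le] by simp

lemma set_integrable_duhamel:
  "set_integrable lborel {0..t} (\<lambda>t'. Wmult (t - t') \<xi> * Wphi_conv s N t' \<xi>)"
proof (rule set_integrable_bound[where f="\<lambda>_. 2 * N powr (-3/2 - s) * phi_mass s N"])
  show "set_integrable lborel {0..t} (\<lambda>_. 2 * N powr (-3/2 - s) * phi_mass s N)"
    by (simp add: set_integrable_def emeasure_lborel_Icc_eq integrable_real_indicator)
  show "AE t' in lborel. t' \<in> {0..t} \<longrightarrow>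
      norm (Wmult (t - t') \<xi> * Wphi_conv s N t' \<xi>) \<le> norm (2 * N powr (-3/2 - s) * phi_mass s N)"
    using norm_duhamel_integrand_le by (intro AE_I2) (simp add: order_trans[OF _ abs_ge_self])
qed (simp add: set_borel_measurable_def)

lemma norm_duhamel_le:
  assumes t: "t \<ge> 0"
  shows "norm (duhamel s N t \<xi>) \<le> t * (2 * N powr (-3/2 - s) * phi_mass s N)"
proof -
  have "norm (duhamel s N t \<xi>) \<le> (\<integral>t'. indicator {0..t} t' * (2 * N powr (-3/2 - s) * phi_mass s N) \<partial>lborel)"
    unfolding duhamel_def set_lebesgue_integral_def
  proof (rule norm_integral_le_integral)
    show "integrable lborel (\<lambda>t'. indicator {0..t} t' * (2 * N powr (-3/2 - s) * phi_mass s N))"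
      by (intro integrable_mult_left integrable_real_indicator) (auto simp: emeasure_lborel_Icc_eq)
    show "norm (indicator {0..t} t' *\<^sub>R (Wmult (t - t') \<xi> * Wphi_conv s N t' \<xi>))
        \<le> indicator {0..t} t' * (2 * N powr (-3/2 - s) * phi_mass s N)" for t'
      using norm_duhamel_integrand_le by (simp add: indicator_def)
  qed
  then show ?thesis
    using t by simp
qed

lemma Hs0_energy_u2_finite:
  assumes N: "N \<ge> 0" and t: "t \<ge> 0"
  shows "Hs0_energy s (u2_hat (phi_hat s N) t) < \<infinity>"
proof (rule Hs0_energy_finite)
  show "bounded (D_sum N)"
    unfolding D_sum_def by (intro bounded_Times bounded_closed_interval)
  show "u2_hat (phi_hat s N) t \<xi> = 0" if "\<xi> \<notin> D_sum N" for \<xi>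
    using norm_u2_hat[of s N t \<xi>] Wphi_conv_eq_0[OF N that] by (simp add: duhamel_def)
  show "norm (u2_hat (phi_hat s N) t \<xi>) \<le> 4 * N * (1 / (4 * pi\<^sup>2)) * (t * (2 * N powr (-3/2 - s) * phi_mass s N))"
    for \<xi>
  proof (cases "\<xi> \<in> D_sum N")
    case True
    then have "\<bar>fst \<xi>\<bar> \<le> 4 * N"
      using N by (auto simp: D_sum_def)
    then show ?thesis
      unfolding norm_u2_hat using norm_duhamel_le[OF t]
      by (intro mult_mono) auto
  next
    case False
    then show ?thesis
      using norm_u2_hat[of s N t \<xi>] Wphi_conv_eq_0[OF N False] N t phi_mass_nonneg
      by (simp add: duhamel_def)
  qed
qed

section \<open>Lower bound for the second iterate\<close>

lemma cos_ge_1_minus_sq_half: "1 - x\<^sup>2 / 2 \<le> cos (x::real)"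
proof -
  have "(sin (x / 2))\<^sup>2 \<le> (x / 2)\<^sup>2"
    using abs_sin_x_le_abs_x[of "x / 2"] by (metis abs_ge_zero power2_abs power_mono)
  then show ?thesis
    using cos_double_sin[of "x / 2"] by (simp add: power2_eq_square)
qed

lemma abs_Psym_le:
  assumes N: "N > 0" and v: "v \<in> D_hull N"
  shows "\<bar>Psym v\<bar> \<le> 80 * N ^ 3"
proof -
  have v_bounds: "N/2 \<le> fst v" "fst v \<le> 2 * N" "\<bar>snd v\<bar> \<le> 6 * N\<^sup>2"
    using v by (auto simp: D_hull_def)
  have pos: "fst v > 0"
    using v_bounds N by linarith
  have "fst v ^ 3 \<le> (2 * N) ^ 3"
    using pos v_bounds by (intro power_mono) auto
  then have cube: "0 \<le> fst v ^ 3" "fst v ^ 3 \<le> 8 * N ^ 3"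
    using pos by simp_all
  have "(snd v)\<^sup>2 \<le> (6 * N\<^sup>2)\<^sup>2"
    using v_bounds(3) by (metis abs_ge_zero power2_abs power_mono)
  then have "(snd v)\<^sup>2 / fst v \<le> (6 * N\<^sup>2)\<^sup>2 / (N/2)"
    using v_bounds pos N by (intro frac_le) auto
  also have "\<dots> = 72 * N ^ 3"
    using N by (simp add: power2_eq_square power3_eq_cube field_simps)
  finally have quotient: "0 \<le> (snd v)\<^sup>2 / fst v" "(snd v)\<^sup>2 / fst v \<le> 72 * N ^ 3"
    using pos by simp_all
  show ?thesis
    unfolding Psym_def abs_le_iff using cube quotient by linarith
qed

lemma fst_squared_le: "N \<ge> 0 \<Longrightarrow> v \<in> D_hull N \<Longrightarrow> (fst v)\<^sup>2 \<le> 4 * N\<^sup>2"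
  using power_mono[of "fst v" "2 * N" 2] by (auto simp: D_hull_def power_mult_distrib)

text \<open>The hypotheses keep the total phase below 1/2 and the total damping below 1/4 on
  \<open>D_hull N\<close>, so the product of the three propagators stays close to 1.\<close>

lemma Re_Wmult_product_ge:
  assumes N: "N > 0" and in_hull: "\<xi> \<in> D_hull N" "z \<in> D_hull N" "w \<in> D_hull N"
    and t': "0 \<le> t'" "t' \<le> t"
    and small_phase: "160 * t * N ^ 3 \<le> 1/2" and small_damping: "8 * N\<^sup>2 * t \<le> 1/4"
  shows "Re (Wmult (t - t') \<xi> * Wmult t' z * Wmult t' w) \<ge> 1/2"
proof -
  define \<theta> where "\<theta> = (t - t') * Psym \<xi> + t' * Psym z + t' * Psym w"
  define d where "d = (fst \<xi>)\<^sup>2 * (t - t') + (fst z)\<^sup>2 * t' + (fst w)\<^sup>2 * t'"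
  have "Wmult (t - t') \<xi> * Wmult t' z * Wmult t' w = exp (\<i> * complex_of_real \<theta> - complex_of_real d)"
    unfolding Wmult_def \<theta>_def d_def exp_add[symmetric] using t'
    by (intro arg_cong[where f=exp]) (simp add: algebra_simps)
  then have Re_eq: "Re (Wmult (t - t') \<xi> * Wmult t' z * Wmult t' w) = exp (- d) * cos \<theta>"
    by (simp add: Re_exp)
  have "\<bar>\<theta>\<bar> \<le> (t - t') * (80 * N ^ 3) + t' * (80 * N ^ 3) + t' * (80 * N ^ 3)"
    unfolding \<theta>_def using t' abs_Psym_le[OF N in_hull(1)] abs_Psym_le[OF N in_hull(2)] abs_Psym_le[OF N in_hull(3)]
    by (intro order_trans[OF abs_triangle_ineq] add_mono order_trans[OF abs_triangle_ineq])
       (auto simp: abs_mult intro!: mult_mono)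
  also have "\<dots> \<le> 160 * t * N ^ 3"
    using t' N by (simp add: algebra_simps)
  finally have "\<bar>\<theta>\<bar> \<le> 1/2"
    using small_phase by linarith
  then have "\<theta>\<^sup>2 \<le> (1/2)\<^sup>2"
    by (metis abs_ge_zero power2_abs power_mono)
  then have cos_ge: "cos \<theta> \<ge> 7/8"
    using cos_ge_1_minus_sq_half[of \<theta>] by (simp add: power2_eq_square)
  have "d \<le> 4 * N\<^sup>2 * (t - t') + 4 * N\<^sup>2 * t' + 4 * N\<^sup>2 * t'"
    unfolding d_def using t' fst_squared_le[of N] N in_hull by (intro add_mono mult_right_mono) auto
  then have "d \<le> 1/4"
    using t' small_damping mult_right_mono[OF t'(2), of "N\<^sup>2"] by (simp add: algebra_simps)
  then have "exp (- d) \<ge> 3/4"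
    using exp_ge_add_one_self[of "- d"] by linarith
  then have "exp (- d) * cos \<theta> \<ge> 3/4 * (7/8)"
    using cos_ge by (intro mult_mono) auto
  then show ?thesis
    unfolding Re_eq by simp
qed

definition R_low :: "real \<Rightarrow> R2 set" where
  "R_low N = {7 * N / 4..2 * N} \<times> {2 * N\<^sup>2..3 * N\<^sup>2}"

definition D_overlap :: "real \<Rightarrow> R2 \<Rightarrow> R2 set" where
  "D_overlap N \<xi> = {N/2..3 * N / 4} \<times> {snd \<xi> - (sqrt 3 + 1) * N\<^sup>2..snd \<xi> - sqrt 3 * N\<^sup>2}"

lemma R_low_subset_D_hull: "N \<ge> 0 \<Longrightarrow> R_low N \<subseteq> D_hull N"
  by (auto simp: R_low_def D_hull_def)

lemma D_overlap_mem:
  assumes N: "N \<ge> 0" and \<xi>: "\<xi> \<in> R_low N" and z: "z \<in> D_overlap N \<xi>"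
  shows "z \<in> D1 N" "\<xi> - z \<in> D2 N"
proof -
  have "sqrt 3 \<le> sqrt (4::real)"
    by (rule real_sqrt_le_mono) simp
  then have "(sqrt 3 + 1) * N\<^sup>2 \<le> 3 * N\<^sup>2"
    by (intro mult_right_mono) auto
  moreover have "0 \<le> sqrt 3 * N\<^sup>2" "0 \<le> N\<^sup>2"
    by simp_all
  moreover have "snd \<xi> - (sqrt 3 + 1) * N\<^sup>2 \<le> snd z" "snd z \<le> snd \<xi> - sqrt 3 * N\<^sup>2"
    "2 * N\<^sup>2 \<le> snd \<xi>" "snd \<xi> \<le> 3 * N\<^sup>2"
    using \<xi> z by (auto simp: R_low_def D_overlap_def)
  ultimately have "- 6 * N\<^sup>2 \<le> snd z" "snd z \<le> 6 * N\<^sup>2"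
    by linarith+
  then show "z \<in> D1 N"
    using z N by (auto simp: D_overlap_def D1_def mem_Times_iff)
  show "\<xi> - z \<in> D2 N"
    using \<xi> z N by (auto simp: R_low_def D_overlap_def D2_def)
qed

lemma measure_D_overlap: "N \<ge> 0 \<Longrightarrow> measure lborel (D_overlap N \<xi>) = N / 4 * N\<^sup>2"
  unfolding D_overlap_def measure_def by (subst emeasure_lborel_Icc_Times) (auto simp: algebra_simps)

lemma Re_Wmult_product_ge_on_support:
  assumes N: "N > 0" and \<xi>: "\<xi> \<in> R_low N" and t': "0 \<le> t'" "t' \<le> t"
    and small: "160 * t * N ^ 3 \<le> 1/2" "8 * N\<^sup>2 * t \<le> 1/4"
    and support: "phi_profile s N z * phi_profile s N (\<xi> - z) \<noteq> 0"
  shows "Re (Wmult (t - t') \<xi> * Wmult t' z * Wmult t' (\<xi> - z)) \<ge> 1/2"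
proof -
  have "z \<in> D1 N \<union> D2 N" "\<xi> - z \<in> D1 N \<union> D2 N"
    using support phi_profile_eq_0[of z N s] phi_profile_eq_0[of "\<xi> - z" N s] by auto
  then have "z \<in> D_hull N" "\<xi> - z \<in> D_hull N"
    using D1_D2_subset_D_hull[of N] N by auto
  moreover have "\<xi> \<in> D_hull N"
    using R_low_subset_D_hull[of N] N \<xi> by auto
  ultimately show ?thesis
    by (intro Re_Wmult_product_ge[OF N _ _ _ t' small])
qed

lemma Re_Wphi_product_ge:
  assumes N: "N > 0" and \<xi>: "\<xi> \<in> R_low N" and t': "0 \<le> t'" "t' \<le> t"
    and small: "160 * t * N ^ 3 \<le> 1/2" "8 * N\<^sup>2 * t \<le> 1/4"
  shows "indicator (D_overlap N \<xi>) z * (N powr (-3 - 2 * s) / 2)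
    \<le> Re (Wmult (t - t') \<xi> * (Wphi_hat s N t' z * Wphi_hat s N t' (\<xi> - z)))"
proof -
  define p where "p = phi_profile s N z * phi_profile s N (\<xi> - z)"
  define E where "E = Wmult (t - t') \<xi> * Wmult t' z * Wmult t' (\<xi> - z)"
  have "Wmult (t - t') \<xi> * (Wphi_hat s N t' z * Wphi_hat s N t' (\<xi> - z)) = E * complex_of_real p"
    unfolding E_def p_def Wphi_hat_def phi_hat_eq by (simp add: mult_ac)
  then have Re_eq: "Re (Wmult (t - t') \<xi> * (Wphi_hat s N t' z * Wphi_hat s N t' (\<xi> - z))) = Re E * p"
    by simp
  have p_nonneg: "0 \<le> p"
    unfolding p_def by (simp add: phi_profile_nonneg)
  have Re_E: "Re E \<ge> 1/2" if "p \<noteq> 0"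
    using Re_Wmult_product_ge_on_support[OF N \<xi> t' small] that unfolding E_def p_def .
  show ?thesis
  proof (cases "z \<in> D_overlap N \<xi>")
    case True
    have "N powr (-3/2 - s) * N powr (-3/2 - s) \<le> p"
      unfolding p_def using D_overlap_mem[OF _ \<xi> True] N
      by (intro mult_mono phi_profile_ge) (auto simp: phi_profile_nonneg)
    moreover have "N powr (-3/2 - s) * N powr (-3/2 - s) = N powr (-3 - 2 * s)"
      using powr_profile_square[OF N] .
    moreover have "0 < N powr (-3 - 2 * s)"
      using N by simp
    ultimately have "N powr (-3 - 2 * s) \<le> p" "p \<noteq> 0"
      by auto
    then have "1/2 * N powr (-3 - 2 * s) \<le> Re E * p"
      using Re_E by (intro mult_mono) auto
    then show ?thesis
      using True Re_eq by simp
  next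
    case False
    have "0 \<le> Re E * p"
      using Re_E p_nonneg by (cases "p = 0") auto
    then show ?thesis
      using False Re_eq by simp
  qed
qed

lemma Re_duhamel_integrand_ge:
  assumes N: "N > 0" and \<xi>: "\<xi> \<in> R_low N" and t': "0 \<le> t'" "t' \<le> t"
    and small: "160 * t * N ^ 3 \<le> 1/2" "8 * N\<^sup>2 * t \<le> 1/4"
  shows "N powr (- 2 * s) / 8 \<le> Re (Wmult (t - t') \<xi> * Wphi_conv s N t' \<xi>)"
proof -
  define F where "F z = Wmult (t - t') \<xi> * (Wphi_hat s N t' z * Wphi_hat s N t' (\<xi> - z))" for z
  have "integrable lborel F"
    unfolding F_def by (intro integrable_mult_right integrable_Wphi_product)
  have "N powr (- 2 * s) = N powr 3 * N powr (-3 - 2 * s)"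
    unfolding powr_add[symmetric] by simp
  then have "N powr (- 2 * s) / 8 = N ^ 3 * N powr (-3 - 2 * s) / 8"
    using N by simp
  also have "\<dots> = measure lborel (D_overlap N \<xi>) * (N powr (-3 - 2 * s) / 2)"
    using N by (simp add: measure_D_overlap power2_eq_square power3_eq_cube)
  also have "\<dots> = (\<integral>z. indicator (D_overlap N \<xi>) z * (N powr (-3 - 2 * s) / 2) \<partial>lborel)"
    by simp
  also have "\<dots> \<le> (\<integral>z. Re (F z) \<partial>lborel)"
  proof (rule integral_mono)
    show "integrable lborel (\<lambda>z. indicator (D_overlap N \<xi>) z * (N powr (-3 - 2 * s) / 2))"
      unfolding D_overlap_def by (intro integrable_mult_left integrable_indicator_Icc_Times)
    show "integrable lborel (\<lambda>z. Re (F z))"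
      using \<open>integrable lborel F\<close> by simp
    show "indicator (D_overlap N \<xi>) z * (N powr (-3 - 2 * s) / 2) \<le> Re (F z)" for z
      unfolding F_def by (rule Re_Wphi_product_ge[OF N \<xi> t' small])
  qed
  also have "\<dots> = Re (integral\<^sup>L lborel F)"
    by (rule integral_Re[OF \<open>integrable lborel F\<close>])
  also have "integral\<^sup>L lborel F = Wmult (t - t') \<xi> * Wphi_conv s N t' \<xi>"
    unfolding F_def Wphi_conv_def by simp
  finally show ?thesis .
qed

lemma norm_duhamel_ge:
  assumes N: "N > 0" and \<xi>: "\<xi> \<in> R_low N" and t: "0 \<le> t"
    and small: "160 * t * N ^ 3 \<le> 1/2" "8 * N\<^sup>2 * t \<le> 1/4"
  shows "t * (N powr (- 2 * s) / 8) \<le> norm (duhamel s N t \<xi>)"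
proof -
  define c where "c = N powr (- 2 * s) / 8"
  define f where "f t' = indicator {0..t} t' *\<^sub>R (Wmult (t - t') \<xi> * Wphi_conv s N t' \<xi>)" for t'
  have f: "integrable lborel f"
    using set_integrable_duhamel unfolding set_integrable_def f_def .
  have "t * c = (\<integral>t'. indicator {0..t} t' * c \<partial>lborel)"
    using t by simp
  also have "\<dots> \<le> (\<integral>t'. Re (f t') \<partial>lborel)"
  proof (rule integral_mono)
    show "integrable lborel (\<lambda>t'. indicator {0..t} t' * c)"
      by (intro integrable_mult_left integrable_real_indicator) (auto simp: emeasure_lborel_Icc_eq)
    show "indicator {0..t} t' * c \<le> Re (f t')" for t'
      unfolding f_def c_def using Re_duhamel_integrand_ge[OF N \<xi> _ _ small, of t' s]
      by (simp add: indicator_def)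
  qed (use f in simp)
  also have "\<dots> = Re (integral\<^sup>L lborel f)"
    by (rule integral_Re[OF f])
  also have "\<dots> = Re (duhamel s N t \<xi>)"
    unfolding duhamel_def set_lebesgue_integral_def f_def[abs_def] ..
  also have "\<dots> \<le> norm (duhamel s N t \<xi>)"
    by (rule complex_Re_le_cmod)
  finally show ?thesis
    unfolding c_def .
qed

lemma norm_u2_hat_ge:
  assumes N: "N > 0" and \<xi>: "\<xi> \<in> R_low N" and t: "0 \<le> t"
    and small: "160 * t * N ^ 3 \<le> 1/2" "8 * N\<^sup>2 * t \<le> 1/4"
  shows "7 * N / 4 * (1 / (4 * pi\<^sup>2)) * (t * (N powr (- 2 * s) / 8)) \<le> norm (u2_hat (phi_hat s N) t \<xi>)"
proof -
  have "7 * N / 4 \<le> \<bar>fst \<xi>\<bar>"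
    using \<xi> N by (auto simp: R_low_def)
  then show ?thesis
    unfolding norm_u2_hat using norm_duhamel_ge[OF N \<xi> t small, of s] N t
    by (intro mult_mono) auto
qed

lemma small_time_conditions:
  fixes N e :: real
  assumes e: "0 < e" and N: "max 32 (320 powr (1 / e)) \<le> N"
  shows "160 * N powr (-3 - e) * N ^ 3 \<le> 1/2" "8 * N\<^sup>2 * N powr (-3 - e) \<le> 1/4"
proof -
  have N32: "32 \<le> N"
    using N by simp
  have "(320 powr (1 / e)) powr e \<le> N powr e"
    using N e by (intro powr_mono2) auto
  then have "320 \<le> N powr e"
    using e by (simp add: powr_powr)
  have "N powr (-3 - e) * N ^ 3 = N powr (-3 - e) * N powr 3"
    using N32 by simp
  also have "\<dots> = 1 / N powr e"
    unfolding powr_add[symmetric] by (simp add: powr_minus_divide)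
  also have "\<dots> \<le> 1 / 320"
    using \<open>320 \<le> N powr e\<close> by (intro divide_left_mono) auto
  finally show "160 * N powr (-3 - e) * N ^ 3 \<le> 1/2"
    by simp
  have "N\<^sup>2 * N powr (-3 - e) = N powr 2 * N powr (-3 - e)"
    using N32 by simp
  also have "\<dots> = N powr (-1 - e)"
    unfolding powr_add[symmetric] by simp
  also have "\<dots> \<le> N powr (-1)"
    using e N32 by (intro powr_mono) auto
  also have "\<dots> \<le> 1 / 32"
    using N32 by (simp add: powr_minus_divide frac_le)
  finally show "8 * N\<^sup>2 * N powr (-3 - e) \<le> 1/4"
    by simp
qed

lemma lower_bound_exponents:
  fixes N s e c :: real
  assumes N: "N > 0"
  shows "N powr (2 * s) * (7 * N / 4 * c * (N powr (-3 - e) * (N powr (- 2 * s) / 8)))\<^sup>2 * (N / 4 * N\<^sup>2)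
    = (7 / 32)\<^sup>2 * c\<^sup>2 / 4 * N powr (-1 - 2 * e - 2 * s)"
proof -
  have "N powr (2 * s) * (7 * N / 4 * c * (N powr (-3 - e) * (N powr (- 2 * s) / 8)))\<^sup>2 * (N / 4 * N\<^sup>2)
      = (7 / 32)\<^sup>2 * c\<^sup>2 / 4 * (N powr (2 * s) * (N powr 1 * N powr (-3 - e) * N powr (- 2 * s))\<^sup>2 * N powr 3)"
    using N by (simp add: power2_eq_square power3_eq_cube powr_realpow[symmetric] field_simps)
  also have "N powr (2 * s) * (N powr 1 * N powr (-3 - e) * N powr (- 2 * s))\<^sup>2 * N powr 3
      = N powr (-1 - 2 * e - 2 * s)"
    unfolding power2_eq_square powr_add[symmetric] by (rule arg_cong[where f="\<lambda>x. N powr x"]) simp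
  finally show ?thesis .
qed

lemma Hs0_energy_u2_ge:
  assumes N: "N \<ge> 1" and t: "t = N powr (-3 - e)"
    and small: "160 * t * N ^ 3 \<le> 1/2" "8 * N\<^sup>2 * t \<le> 1/4"
  shows "ennreal (5 powr (- \<bar>s\<bar>) * (7 / 32)\<^sup>2 * (1 / (4 * pi\<^sup>2))\<^sup>2 / 4 * N powr (-1 - 2 * e - 2 * s))
    \<le> Hs0_energy s (u2_hat (phi_hat s N) t)"
proof -
  define c where "c = 1 / (4 * pi\<^sup>2)"
  define u where "u = 7 * N / 4 * c * (t * (N powr (- 2 * s) / 8))"
  define V where "V = 5 powr (- \<bar>s\<bar>) * N powr (2 * s) * u\<^sup>2"
  have u: "0 \<le> u"
    unfolding u_def c_def t using N by simp
  have pointwise: "ennreal V * indicator (R_low N) \<xi>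
      \<le> ennreal ((1 + fst \<xi> ^ 2) powr s * (cmod (u2_hat (phi_hat s N) t \<xi>))\<^sup>2)" for \<xi>
  proof (cases "\<xi> \<in> R_low N")
    case True
    then have fst_bounds: "7 * N / 4 \<le> fst \<xi>" "fst \<xi> \<le> 2 * N"
      by (auto simp: R_low_def)
    have "u \<le> cmod (u2_hat (phi_hat s N) t \<xi>)"
      unfolding u_def c_def using N True small by (intro norm_u2_hat_ge) (auto simp: t)
    then have "u\<^sup>2 \<le> (cmod (u2_hat (phi_hat s N) t \<xi>))\<^sup>2"
      using u by (intro power_mono)
    moreover have "5 powr (- \<bar>s\<bar>) * N powr (2 * s) \<le> (1 + fst \<xi> ^ 2) powr s"
      using fst_bounds N by (intro sobolev_weight_bounds(1)) auto
    ultimately have "V \<le> (1 + fst \<xi> ^ 2) powr s * (cmod (u2_hat (phi_hat s N) t \<xi>))\<^sup>2"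
      unfolding V_def by (intro mult_mono) auto
    then show ?thesis
      using True by (simp add: ennreal_leI)
  qed simp
  have "ennreal (5 powr (- \<bar>s\<bar>) * (7 / 32)\<^sup>2 * c\<^sup>2 / 4 * N powr (-1 - 2 * e - 2 * s))
      = ennreal (V * ((2 * N - 7 * N / 4) * (3 * N\<^sup>2 - 2 * N\<^sup>2)))"
    using lower_bound_exponents[of N s c e] N unfolding V_def u_def t by (simp add: algebra_simps)
  also have "\<dots> = (\<integral>\<^sup>+ \<xi>. ennreal V * indicator (R_low N) \<xi> \<partial>lborel)"
    unfolding R_low_def V_def using N by (intro nn_integral_indicator_Icc_Times[symmetric]) auto
  also have "\<dots> \<le> Hs0_energy s (u2_hat (phi_hat s N) t)"
    unfolding Hs0_energy_def by (intro nn_integral_mono pointwise)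
  finally show ?thesis
    unfolding c_def .
qed

theorem mainTheorem14:
  fixes s eps0 :: real
  assumes "0 < eps0" and "eps0 < 1"
  shows "(\<exists>C>0. \<forall>N\<ge>1. 1 / C \<le> Hs0_norm s (phi_hat s N) \<and> Hs0_norm s (phi_hat s N) \<le> C)
       \<and> (\<exists>C>0. \<exists>N0. \<forall>N\<ge>N0.
            (Hs0_norm s (u2_hat (phi_hat s N) (N powr (- 3 - eps0))))\<^sup>2 \<ge> C * N powr (- 1 - 2 * eps0 - 2 * s))"
proof (intro conjI)
  show "\<exists>C>0. \<forall>N\<ge>1. 1 / C \<le> Hs0_norm s (phi_hat s N) \<and> Hs0_norm s (phi_hat s N) \<le> C"
    by (rule Hs0_norm_phi_uniform_bounds)
  define C where "C = 5 powr (- \<bar>s\<bar>) * (7 / 32)\<^sup>2 * (1 / (4 * pi\<^sup>2))\<^sup>2 / 4"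
  have "C * N powr (- 1 - 2 * eps0 - 2 * s) \<le> (Hs0_norm s (u2_hat (phi_hat s N) (N powr (- 3 - eps0))))\<^sup>2"
    if N: "max 32 (320 powr (1 / eps0)) \<le> N" for N
  proof (rule Hs0_norm_squared_ge)
    show "Hs0_energy s (u2_hat (phi_hat s N) (N powr (- 3 - eps0))) < \<infinity>"
      using N by (intro Hs0_energy_u2_finite) auto
    show "ennreal (C * N powr (- 1 - 2 * eps0 - 2 * s)) \<le> Hs0_energy s (u2_hat (phi_hat s N) (N powr (- 3 - eps0)))"
      unfolding C_def using N small_time_conditions[OF assms(1) N] by (intro Hs0_energy_u2_ge) auto
  qed
  moreover have "C > 0"
    unfolding C_def by simp
  ultimately show "\<exists>C>0. \<exists>N0. \<forall>N\<ge>N0.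
      (Hs0_norm s (u2_hat (phi_hat s N) (N powr (- 3 - eps0))))\<^sup>2 \<ge> C * N powr (- 1 - 2 * eps0 - 2 * s)"
    by blast
qed

end
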